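(* There exists a group homomorphism $\tau:\mathrm{SL}(2,\mathbf Z)\to\mathcal A^\times$ with the following properties. (a) Letting $E_i$ be the subspace of $E$ spanned by $e_1,\dots,e_{2i}$ ($i\ge0$), the chain $0=E_0\subset E_1\subset E_2\subset\cdots$ is a filtration by $\mathbf C\,\mathrm{SL}(2,\mathbf Z)$-submodules (with $Y$ acting by $\tau(Y)$), and for each $i\in\mathbf N$ the quotient $E_i/E_{i-1}$ is isomorphic to the standard $2$-dimensional $\mathbf C\,\mathrm{SL}(2,\mathbf Z)$-module. (b) $\tau(T)=J_\infty$. (c) $\tau(Y)$ is an integer matrix for every $Y\in\mathrm{SL}(2,\mathbf Z)$. (d) There is a constant $C$ such that $|\tau(S)_{i,j}|\le 2^{Cj}$ for all $i,j\in\mathbf N$.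
   Context: $\mathbf N=\{1,2,\dots\}$. $E$ is the complex vector space with basis $\{e_n\}_{n\in\mathbf N}$; $\mathcal A$ is the ring of $\mathbf N\times\mathbf N$ complex matrices with finitely many nonzero entries in each column, acting on $E$ on the left in this basis. $S=\begin{pmatrix}0&-1\\1&0\end{pmatrix}$, $T=\begin{pmatrix}1&1\\0&1\end{pmatrix}$. $J_\infty$ is the matrix with $(J_\infty)_{i,j}=1$ if $j=i$ or $j=i+1$, and $0$ otherwise. *)

theory Defs
  imports "HOL-Analysis.Analysis"
begin

text \<open>Matrices in the basis (e_n), n in N = {1,2,...}: functions nat => nat => complex,
  row index first; index 0 is unused (entries with a zero index are required to vanish).\<close>
type_synonym mat = "nat \<Rightarrow> nat \<Rightarrow> complex"
type_synonym vect = "nat \<Rightarrow> complex"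

definition ringA :: "mat set" where
  "ringA = {M. (\<forall>i j. (i = 0 \<or> j = 0) \<longrightarrow> M i j = 0) \<and> (\<forall>j. finite {i. M i j \<noteq> 0})}"

definition mat_mult :: "mat \<Rightarrow> mat \<Rightarrow> mat" (infixl "\<star>" 70) where
  "(M \<star> N) i j = (\<Sum>k\<in>{k. N k j \<noteq> 0}. M i k * N k j)"

definition mat_id :: mat where
  "mat_id i j = (if i = j \<and> i \<ge> 1 then 1 else 0)"

definition unitsA :: "mat set" where
  "unitsA = {M \<in> ringA. \<exists>N\<in>ringA. M \<star> N = mat_id \<and> N \<star> M = mat_id}"

definition spaceE :: "vect set" where
  "spaceE = {v. v 0 = 0 \<and> finite {n. v n \<noteq> 0}}"

definition mat_act :: "mat \<Rightarrow> vect \<Rightarrow> vect" where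
  "mat_act M v i = (\<Sum>k\<in>{k. v k \<noteq> 0}. M i k * v k)"

definition filtE :: "nat \<Rightarrow> vect set" where
  "filtE i = {v \<in> spaceE. \<forall>n. n > 2 * i \<longrightarrow> v n = 0}"

definition SL2Z :: "(int^2^2) set" where
  "SL2Z = {X. det X = 1}"

definition matS :: "int^2^2" where
  "matS = vector [vector [0, -1], vector [1, 0]]"

definition matT :: "int^2^2" where
  "matT = vector [vector [1, 1], vector [0, 1]]"

definition J_inf :: mat where
  "J_inf i j = (if i \<ge> 1 \<and> (j = i \<or> j = i + 1) then 1 else 0)"

definition std_act :: "int^2^2 \<Rightarrow> complex^2 \<Rightarrow> complex^2" where
  "std_act Y w = (\<chi> i j. of_int (Y $ i $ j)) *v w"

end

theory Submission
  imports Defs "HOL-Computational_Algebra.Formal_Power_Series"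
begin

text \<open>
  The representation is \<open>\<tau>(Y) = R \<Phi>(\<rho>(Y)) R\<^sup>-\<^sup>1\<close>. The homomorphism \<open>\<rho>\<close> (\<open>rep\<close>) from
  \<open>SL(2,\<int>)\<close> to \<open>GL\<^sub>2(\<int>[[x]])\<close> sends \<open>S\<close> to \<open>[[0, b], [c, 0]]\<close> and \<open>T\<close> to
  \<open>[[1, x], [1, 1 + x]]\<close>, where \<open>c(x) = -C(-x)\<close> for the Catalan series \<open>C\<close> and \<open>b = 1 - x c\<close>;
  the identity \<open>c = -1 + x c\<^sup>2\<close> gives \<open>b c = -1\<close>, hence the relations \<open>S\<^sup>2 = (S T)\<^sup>3 = -1\<close>, and
  \<open>\<rho>\<close> is defined on all of \<open>SL(2,\<int>)\<close> through the Euclidean algorithm. \<open>\<Phi>\<close> (\<open>toeplitz\<close>)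
  turns a \<open>2 \<times> 2\<close> matrix of power series into the multiplicative block upper triangular
  Toeplitz matrix of its coefficients, and \<open>R\<close> (\<open>binom_mat\<close>) is the binomial matrix
  \<open>R\<^sub>m\<^sub>n = (\<lceil>n/2\<rceil> choose n - m)\<close>, which conjugates \<open>\<Phi>(\<rho>(T) - 1)\<close> into the shift; so
  \<open>\<tau>(T) = J\<^sub>\<infinity>\<close>. The diagonal blocks of \<open>\<Phi>(\<rho>(Y))\<close> are the constant term of \<open>\<rho>(Y)\<close>, which is
  \<open>Y\<close> itself, so the \<open>i\<close>-th diagonal block of \<open>\<tau>(Y)\<close> is \<open>T\<^sup>i Y T\<^sup>-\<^sup>i\<close>: this gives the
  two-dimensional quotients of the filtration. The entries of \<open>\<tau>(S)\<close> are exponentially bounded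
  because Catalan numbers grow like \<open>4\<^sup>n\<close>, binomial coefficients like \<open>2\<^sup>n\<close> and the coefficients
  of \<open>\<rho>(T)\<^sup>-\<^sup>k\<close> like \<open>3\<^sup>k\<close>.
\<close>

section \<open>A representation of \<open>SL(2,\<int>)\<close> over \<open>\<int>[[x]]\<close>\<close>

datatype fmat = FMat (e11: "int fps") (e12: "int fps") (e21: "int fps") (e22: "int fps")

instantiation fmat :: ring_1
begin
definition "0 = FMat 0 0 0 0"
definition "1 = FMat 1 0 0 1"
definition "A + B = FMat (e11 A + e11 B) (e12 A + e12 B) (e21 A + e21 B) (e22 A + e22 B)"
definition "A - B = FMat (e11 A - e11 B) (e12 A - e12 B) (e21 A - e21 B) (e22 A - e22 B)"
definition "- A = FMat (- e11 A) (- e12 A) (- e21 A) (- e22 A)"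
definition "A * B = FMat (e11 A * e11 B + e12 A * e21 B) (e11 A * e12 B + e12 A * e22 B)
                         (e21 A * e11 B + e22 A * e21 B) (e21 A * e12 B + e22 A * e22 B)"
instance
  by standard (auto simp: zero_fmat_def one_fmat_def plus_fmat_def minus_fmat_def uminus_fmat_def
      times_fmat_def algebra_simps)
end

lemma fmat_eqI: "e11 A = e11 B \<Longrightarrow> e12 A = e12 B \<Longrightarrow> e21 A = e21 B \<Longrightarrow> e22 A = e22 B \<Longrightarrow> A = B"
  by (cases A; cases B) auto

lemma fmat_sel [simp]:
  "e11 (A * B) = e11 A * e11 B + e12 A * e21 B" "e12 (A * B) = e11 A * e12 B + e12 A * e22 B"
  "e21 (A * B) = e21 A * e11 B + e22 A * e21 B" "e22 (A * B) = e21 A * e12 B + e22 A * e22 B"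
  "e11 (A + B) = e11 A + e11 B" "e12 (A + B) = e12 A + e12 B"
  "e21 (A + B) = e21 A + e21 B" "e22 (A + B) = e22 A + e22 B"
  "e11 (A - B) = e11 A - e11 B" "e12 (A - B) = e12 A - e12 B"
  "e21 (A - B) = e21 A - e21 B" "e22 (A - B) = e22 A - e22 B"
  "e11 (- A) = - e11 A" "e12 (- A) = - e12 A" "e21 (- A) = - e21 A" "e22 (- A) = - e22 A"
  "e11 1 = 1" "e12 1 = 0" "e21 1 = 0" "e22 1 = 1"
  "e11 0 = 0" "e12 0 = 0" "e21 0 = 0" "e22 0 = 0"
  by (simp_all add: times_fmat_def plus_fmat_def minus_fmat_def uminus_fmat_def one_fmat_def
      zero_fmat_def)

lemma fmat_square_eq_self_minus_one:
  assumes "e11 A + e22 A = 1" and "e11 A * e22 A - e12 A * e21 A = 1"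
  shows "A * A = A - 1"
proof -
  have "A * A = FMat (e11 A + e22 A) 0 0 (e11 A + e22 A) * A
                - FMat (e11 A * e22 A - e12 A * e21 A) 0 0 (e11 A * e22 A - e12 A * e21 A)"
    by (rule fmat_eqI) (simp_all add: algebra_simps)
  also have "\<dots> = A - 1"
    using assms by (simp add: one_fmat_def[symmetric])
  finally show ?thesis .
qed

text \<open>\<open>catalan_alt n = (-1)^(n+1)\<close> times the \<open>n\<close>-th Catalan number.\<close>
fun catalan_alt :: "nat \<Rightarrow> int" where
  "catalan_alt 0 = -1"
| "catalan_alt (Suc n) = (\<Sum>i\<le>n. catalan_alt i * catalan_alt (n - i))"

definition fps_c :: "int fps" where "fps_c = Abs_fps catalan_alt"
definition fps_b :: "int fps" where "fps_b = 1 - fps_X * fps_c"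

lemma fps_c_eq: "fps_c = -1 + fps_X * (fps_c * fps_c)"
proof (rule fps_ext)
  fix n show "fps_nth fps_c n = fps_nth (-1 + fps_X * (fps_c * fps_c)) n"
  proof (cases n)
    case (Suc m)
    have "fps_nth (fps_X * (fps_c * fps_c)) (Suc m) = fps_nth (fps_c * fps_c) m"
      by simp
    also have "\<dots> = (\<Sum>i\<le>m. catalan_alt i * catalan_alt (m - i))"
      by (simp only: fps_mult_nth atLeast0AtMost fps_c_def fps_nth_Abs_fps)
    finally have "fps_nth (fps_X * (fps_c * fps_c)) (Suc m) = catalan_alt (Suc m)"
      by simp
    then show ?thesis using Suc by (simp add: fps_c_def)
  qed (simp add: fps_c_def)
qed

lemma fps_b_mult_c: "fps_b * fps_c = -1"
  using fps_c_eq by (simp add: fps_b_def algebra_simps)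

definition rep_S :: fmat where "rep_S = FMat 0 fps_b fps_c 0"
definition rep_T :: fmat where "rep_T = FMat 1 fps_X 1 (1 + fps_X)"
definition rep_T_inv :: fmat where "rep_T_inv = FMat (1 + fps_X) (- fps_X) (-1) 1"

lemma rep_S_squared: "rep_S * rep_S = -1"
  by (rule fmat_eqI) (simp_all add: rep_S_def fps_b_mult_c mult.commute[of fps_c fps_b])

lemma rep_T_inverse: "rep_T * rep_T_inv = 1" "rep_T_inv * rep_T = 1"
  by (rule fmat_eqI; simp add: rep_T_def rep_T_inv_def algebra_simps)+

text \<open>\<open>rep_S * rep_T\<close> has trace and determinant \<open>1\<close>, so by Cayley--Hamilton it is a root of
  \<open>x\<^sup>2 - x + 1\<close>, whence its cube is \<open>-1\<close>.\<close>
lemma rep_ST_cubed: "rep_S * rep_T * (rep_S * rep_T) * (rep_S * rep_T) = -1"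
proof -
  have sq: "rep_S * rep_T * (rep_S * rep_T) = rep_S * rep_T - 1"
    using fps_b_mult_c
    by (intro fmat_square_eq_self_minus_one)
      (simp_all add: rep_S_def rep_T_def fps_b_def algebra_simps)
  have "rep_S * rep_T * (rep_S * rep_T) * (rep_S * rep_T) = (rep_S * rep_T - 1) * (rep_S * rep_T)"
    by (simp only: sq)
  also have "\<dots> = -1"
    by (simp add: algebra_simps sq[unfolded mult.assoc])
  finally show ?thesis .
qed

lemma rep_TSTST: "rep_T * rep_S * rep_T * rep_S * rep_T = rep_S"
proof -
  have "rep_S * (rep_T * rep_S * rep_T * rep_S * rep_T) = rep_S * rep_S"
    using rep_ST_cubed rep_S_squared by (simp only: mult.assoc)
  then have "- rep_S * (rep_S * (rep_T * rep_S * rep_T * rep_S * rep_T))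
      = - rep_S * (rep_S * rep_S)"
    by simp
  then show ?thesis using rep_S_squared by (simp add: mult.assoc[symmetric])
qed

definition mat2 :: "int \<Rightarrow> int \<Rightarrow> int \<Rightarrow> int \<Rightarrow> int^2^2" where
  "mat2 a b c d = vector [vector [a, b], vector [c, d]]"

lemma mat2_nth [simp]:
  "mat2 a b c d $ 1 $ 1 = a" "mat2 a b c d $ 1 $ 2 = b"
  "mat2 a b c d $ 2 $ 1 = c" "mat2 a b c d $ 2 $ 2 = d"
  by (simp_all add: mat2_def)

lemma mat2_cases: obtains a b c d where "Y = mat2 a b c d"
proof
  show "Y = mat2 (Y$1$1) (Y$1$2) (Y$2$1) (Y$2$2)" by (simp add: vec_eq_iff forall_2)
qed

lemma mat2_eq_iff: "mat2 a b c d = mat2 a' b' c' d' \<longleftrightarrow> a = a' \<and> b = b' \<and> c = c' \<and> d = d'"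
  by (metis mat2_nth)

lemma mat2_mult:
  "mat2 a b c d ** mat2 a' b' c' d' = mat2 (a*a' + b*c') (a*b' + b*d') (c*a' + d*c') (c*b' + d*d')"
  by (simp add: vec_eq_iff forall_2 matrix_matrix_mult_def sum_2)

lemma mat2_uminus: "- mat2 a b c d = mat2 (-a) (-b) (-c) (-d)"
  by (simp add: vec_eq_iff forall_2)

lemma det_mat2: "det (mat2 a b c d) = a * d - b * c"
  by (simp add: det_2)

lemma matT_eq: "matT = mat2 1 1 0 1" by (simp add: matT_def mat2_def)
lemma matS_eq: "matS = mat2 0 (-1) 1 0" by (simp add: matS_def mat2_def)

lemma det_matS [simp]: "det matS = 1"
  by (simp add: matS_eq det_mat2)

lemma det_mat2_T_pow [simp]: "det (mat2 1 q 0 1) = 1"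
  by (simp add: det_mat2)

lemma mat2_one_mult [simp]: "mat2 1 0 0 1 ** (Y::int^2^2) = Y"
  by (cases Y rule: mat2_cases) (simp add: mat2_mult)

lemma matrix_mult_uminus_right: "(A::'a::ring_1^'n^'m) ** (- B) = - (A ** B)"
  by (simp add: matrix_matrix_mult_def vec_eq_iff sum_negf)

lemma matrix_mult_uminus_left: "(- A) ** (B::'a::ring_1^'n^'m) = - (A ** B)"
  by (simp add: matrix_matrix_mult_def vec_eq_iff sum_negf)

lemma det_uminus_2: "det (- (M::'a::comm_ring_1^2^2)) = det M"
  by (simp add: det_2)

lemma matS_matS_mult: "matS ** (matS ** Y) = - (Y::int^2^2)"
  by (cases Y rule: mat2_cases) (simp add: matS_eq mat2_mult mat2_uminus)

lemma det_one_lower_left_zero: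
  assumes "det (mat2 a b 0 d) = 1"
  shows "(a = 1 \<and> d = 1) \<or> (a = -1 \<and> d = -1)"
  using assms zmult_eq_1_iff by (simp add: det_mat2)

definition rep_T_pow :: "int \<Rightarrow> fmat" where
  "rep_T_pow q = (if 0 \<le> q then rep_T ^ nat q else rep_T_inv ^ nat (- q))"

lemma rep_T_pow_0 [simp]: "rep_T_pow 0 = 1"
  by (simp add: rep_T_pow_def)

lemma rep_T_pow_add1: "rep_T_pow (q + 1) = rep_T * rep_T_pow q"
proof (cases "0 \<le> q")
  case True
  then have "nat (q + 1) = Suc (nat q)" by simp
  then show ?thesis using True by (simp add: rep_T_pow_def)
next
  case False
  show ?thesis
  proof (cases "q = -1")
    case True then show ?thesis by (simp add: rep_T_pow_def rep_T_inverse)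
  next
    case False
    with \<open>\<not> 0 \<le> q\<close> have "nat (- q) = Suc (nat (- q - 1))" "\<not> 0 \<le> q + 1" by simp_all
    then have "rep_T_pow q = rep_T_inv * rep_T_pow (q + 1)" by (simp add: rep_T_pow_def)
    then show ?thesis by (simp add: mult.assoc[symmetric] rep_T_inverse)
  qed
qed

lemma rep_T_pow_diff1: "rep_T_pow (q - 1) = rep_T_inv * rep_T_pow q"
proof -
  have "rep_T_inv * rep_T_pow q = rep_T_inv * rep_T * rep_T_pow (q - 1)"
    using rep_T_pow_add1[of "q - 1"] by (simp add: mult.assoc)
  then show ?thesis by (simp add: rep_T_inverse)
qed

lemma rep_T_pow_1 [simp]: "rep_T_pow 1 = rep_T"
  using rep_T_pow_add1[of 0] by simp

lemma rep_T_pow_minus1 [simp]: "rep_T_pow (-1) = rep_T_inv"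
  using rep_T_pow_diff1[of 0] by simp

definition euclid_step :: "int^2^2 \<Rightarrow> int^2^2" where
  "euclid_step Y = mat2 (Y$2$1) (Y$2$2)
    (- (Y$1$1 mod Y$2$1)) (- (Y$1$2 - (Y$1$1 div Y$2$1) * Y$2$2))"

lemma euclid_step_decomp:
  "mat2 1 (Y$1$1 div Y$2$1) 0 1 ** (matS ** euclid_step Y) = Y"
proof -
  obtain a b c d where Y: "Y = mat2 a b c d" by (rule mat2_cases)
  have "a = (a div c) * c + a mod c" by simp
  then show ?thesis by (simp add: Y euclid_step_def matS_eq mat2_mult algebra_simps)
qed

lemma det_euclid_step: "det (euclid_step Y) = det Y"
proof -
  obtain a b c d where Y: "Y = mat2 a b c d" by (rule mat2_cases)
  have e: "a mod c = a - (a div c) * c" by (simp add: minus_div_mult_eq_mod)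
  show ?thesis unfolding Y euclid_step_def mat2_nth det_mat2 e by (simp add: algebra_simps)
qed

text \<open>The image of \<open>Y\<close> is read off the Euclidean algorithm on its first column,
  using \<open>Y = T\<^sup>q S (euclid_step Y)\<close>.\<close>
function rep :: "int^2^2 \<Rightarrow> fmat" where
  "rep Y = (if Y$2$1 = 0 then (if Y$1$1 = 1 then rep_T_pow (Y$1$2) else - rep_T_pow (- Y$1$2))
            else rep_T_pow (Y$1$1 div Y$2$1) * rep_S * rep (euclid_step Y))"
  by auto
termination
  by (relation "Wellfounded.measure (\<lambda>Y. nat \<bar>Y$2$1\<bar>)") (auto simp: euclid_step_def abs_mod_less)

declare rep.simps [simp del]

lemma rep_upper:
  "rep (mat2 a b 0 d) = (if a = 1 then rep_T_pow b else - rep_T_pow (- b))"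
  by (subst rep.simps) simp

lemma rep_step: "Y$2$1 \<noteq> 0 \<Longrightarrow> rep Y = rep_T_pow (Y$1$1 div Y$2$1) * rep_S * rep (euclid_step Y)"
  by (subst rep.simps) simp

lemma rep_T_mult:
  assumes "det Y = 1"
  shows "rep (mat2 1 1 0 1 ** Y) = rep_T * rep Y"
proof -
  obtain a b c d where Y: "Y = mat2 a b c d" by (rule mat2_cases)
  have TY: "mat2 1 1 0 1 ** Y = mat2 (a + c) (b + d) c d" by (simp add: Y mat2_mult)
  show ?thesis
  proof (cases "c = 0")
    case True
    then consider "a = 1" "d = 1" | "a = -1" "d = -1" using det_one_lower_left_zero assms Y by blast
    then show ?thesis
    proof cases
      case 1
      then show ?thesis
        using True unfolding TY by (simp add: Y rep_upper rep_T_pow_add1[symmetric] add.commute)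
    next
      case 2
      have "rep_T_pow (1 - b) = rep_T * rep_T_pow (- b)"
        using rep_T_pow_add1[of "- b"] by (simp add: algebra_simps)
      then show ?thesis using True 2 unfolding TY by (simp add: Y rep_upper)
    qed
  next
    case False
    then have "(a + c) div c = a div c + 1" "(a + c) mod c = a mod c" by simp_all
    then have "euclid_step (mat2 (a + c) (b + d) c d) = euclid_step Y"
      by (simp add: euclid_step_def Y algebra_simps)
    with False show ?thesis
      unfolding TY by (simp add: rep_step Y rep_T_pow_add1 mult.assoc \<open>(a + c) div c = a div c + 1\<close>)
  qed
qed

lemma rep_T_pow_mult:
  assumes "det Y = 1"
  shows "rep (mat2 1 q 0 1 ** Y) = rep_T_pow q * rep Y"
proof (induction q rule: int_induct[where k=0])
  case base then show ?case by simp
next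
  case (step1 i)
  have "mat2 1 (i + 1) 0 1 ** Y = mat2 1 1 0 1 ** (mat2 1 i 0 1 ** Y)"
    by (simp add: matrix_mul_assoc mat2_mult)
  then show ?case
    using rep_T_mult[of "mat2 1 i 0 1 ** Y"] step1(2) assms
    by (simp add: det_mul rep_T_pow_add1 mult.assoc)
next
  case (step2 i)
  let ?Z = "mat2 1 (i - 1) 0 1 ** Y"
  have "mat2 1 i 0 1 ** Y = mat2 1 1 0 1 ** ?Z"
    by (simp add: matrix_mul_assoc mat2_mult)
  then have "rep_T_pow i * rep Y = rep_T * rep ?Z"
    using step2(2) rep_T_mult[of ?Z] assms by (simp add: det_mul)
  then have "rep_T_inv * (rep_T_pow i * rep Y) = rep ?Z"
    by (simp add: mult.assoc[symmetric] rep_T_inverse)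
  then show ?case by (simp add: rep_T_pow_diff1 mult.assoc)
qed

lemma rep_uminus: "det Y = 1 \<Longrightarrow> rep (- Y) = - rep Y"
proof (induction Y rule: rep.induct)
  case (1 Y)
  obtain a b c d where Y: "Y = mat2 a b c d" by (rule mat2_cases)
  show ?case
  proof (cases "c = 0")
    case True
    then have "(a = 1 \<and> d = 1) \<or> (a = -1 \<and> d = -1)"
      using det_one_lower_left_zero "1.prems" Y by blast
    then show ?thesis using True by (auto simp: Y mat2_uminus rep_upper)
  next
    case False
    have "euclid_step (- Y) = - euclid_step Y"
      by (simp add: Y mat2_uminus euclid_step_def algebra_simps)
    moreover have "rep (- euclid_step Y) = - rep (euclid_step Y)"
      using "1.IH" "1.prems" False Y det_euclid_step by simp
    ultimately show ?thesis using False by (simp add: Y mat2_uminus rep_step)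
  qed
qed

lemma rep_ST_eq: "- (rep_T_inv * rep_S * rep_T_inv * rep_S) = rep_S * rep_T"
proof -
  have STST: "rep_S * rep_T * rep_S * rep_T = rep_T_inv * rep_S"
  proof -
    have "rep_T_inv * (rep_T * rep_S * rep_T * rep_S * rep_T) = rep_T_inv * rep_S"
      by (simp add: rep_TSTST)
    then show ?thesis by (simp add: mult.assoc[symmetric] rep_T_inverse)
  qed
  have "rep_S * rep_T * rep_S = rep_T_inv * rep_S * rep_T_inv"
  proof -
    have "rep_S * rep_T * rep_S * rep_T * rep_T_inv = rep_T_inv * rep_S * rep_T_inv"
      using STST by simp
    then show ?thesis by (simp add: mult.assoc rep_T_inverse)
  qed
  then have "rep_T_inv * rep_S * rep_T_inv * rep_S = rep_S * rep_T * rep_S * rep_S"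
    by simp
  also have "\<dots> = - (rep_S * rep_T)"
    by (simp add: mult.assoc rep_S_squared)
  finally show ?thesis by simp
qed

definition S_equivariant :: "int^2^2 \<Rightarrow> bool" where
  "S_equivariant Y \<longleftrightarrow> rep (matS ** Y) = rep_S * rep Y"

lemma S_equivariant_uminus:
  assumes "det Y = 1"
  shows "S_equivariant (- Y) \<longleftrightarrow> S_equivariant Y"
  using assms rep_uminus[of Y] rep_uminus[of "matS ** Y"]
  by (auto simp: S_equivariant_def matrix_mult_uminus_right det_mul)

lemma square_minus_one_swap:
  fixes s x y :: "'a::ring_1"
  assumes "s * s = -1"
  shows "- y = s * x \<longleftrightarrow> s * y = x"
proof
  assume "- y = s * x"
  then have "s * (- y) = s * s * x" by (simp add: mult.assoc)
  then show "s * y = x" using assms by simp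
next
  assume "s * y = x"
  then have "s * x = s * s * y" by (simp add: mult.assoc)
  then show "- y = s * x" using assms by simp
qed

lemma S_equivariant_S:
  assumes "det Y = 1"
  shows "S_equivariant (matS ** Y) \<longleftrightarrow> S_equivariant Y"
proof -
  have "rep (matS ** (matS ** Y)) = - rep Y"
    using assms by (simp add: matS_matS_mult rep_uminus)
  then show ?thesis
    unfolding S_equivariant_def using square_minus_one_swap[OF rep_S_squared] by auto
qed

lemma S_equivariant_reduced:
  assumes "det Y = 1" and "0 \<le> Y$1$1" and "Y$1$1 < Y$2$1"
  shows "S_equivariant Y"
proof -
  have "euclid_step Y = - (matS ** Y)"
    using assms by (cases Y rule: mat2_cases)
      (simp add: euclid_step_def matS_eq mat2_mult mat2_uminus)
  then have "rep Y = - (rep_S * rep (matS ** Y))"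
    using assms by (simp add: rep_step rep_uminus det_mul)
  then have "rep_S * rep Y = rep (matS ** Y)"
    by (simp add: mult.assoc[symmetric] rep_S_squared)
  then show ?thesis by (simp add: S_equivariant_def)
qed

lemma S_equivariant_T:
  assumes "det Y = 1" and "S_equivariant Y" and "S_equivariant (mat2 1 (-1) 0 1 ** (matS ** Y))"
  shows "S_equivariant (mat2 1 1 0 1 ** Y)"
proof -
  let ?U = "mat2 1 (-1) 0 1 ** (matS ** Y)"
  have det_U: "det ?U = 1" using assms(1) by (simp add: det_mul)
  have "matS ** (mat2 1 1 0 1 ** Y) = - (mat2 1 (-1) 0 1 ** (matS ** ?U))"
    by (cases Y rule: mat2_cases) (simp add: matS_eq mat2_mult mat2_uminus)
  then have "rep (matS ** (mat2 1 1 0 1 ** Y)) = - (rep_T_inv * rep (matS ** ?U))"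
    using det_U by (simp add: rep_uminus rep_T_pow_mult det_mul)
  also have "\<dots> = - (rep_T_inv * (rep_S * (rep_T_inv * rep (matS ** Y))))"
    using assms(1,3) by (simp add: S_equivariant_def rep_T_pow_mult det_mul)
  also have "\<dots> = - (rep_T_inv * rep_S * rep_T_inv * rep_S) * rep Y"
    using assms(2) by (simp add: S_equivariant_def mult.assoc)
  also have "\<dots> = rep_S * rep_T * rep Y"
    by (simp only: rep_ST_eq)
  also have "\<dots> = rep_S * rep (mat2 1 1 0 1 ** Y)"
    by (simp add: rep_T_mult[OF assms(1)] mult.assoc)
  finally show ?thesis by (simp add: S_equivariant_def)
qed

text \<open>Induction on \<open>k\<close>: by the relation \<open>S T = -T\<^sup>-\<^sup>1 S T\<^sup>-\<^sup>1 S\<close>, the step from \<open>k\<close> to \<open>k + 1\<close>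
  only needs \<open>S\<close>-equivariance at a matrix whose \<open>S\<close>-image again has a reduced first column.\<close>
lemma S_equivariant_T_pow_reduced:
  assumes "det (mat2 a b c d) = 1" and "0 \<le> a" and "a < c"
  shows "S_equivariant (mat2 1 (int k) 0 1 ** mat2 a b c d)"
proof (induction k)
  case 0
  show ?case using assms S_equivariant_reduced by simp
next
  case (Suc k)
  let ?Z = "mat2 1 (int k) 0 1 ** mat2 a b c d"
  let ?W = "mat2 1 (-1) 0 1 ** (matS ** ?Z)"
  have det_Z: "det ?Z = 1" and det_W: "det ?W = 1"
    using assms(1) by (simp_all add: det_mul)
  have "S_equivariant (matS ** - ?W)"
  proof (rule S_equivariant_reduced)
    show "det (matS ** - ?W) = 1" using det_W by (simp add: det_mul det_uminus_2)
    have "matS ** - ?W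
        = mat2 (a + int k * c) (b + int k * d) (c + (a + int k * c)) (d + (b + int k * d))"
      by (simp add: matS_eq mat2_mult mat2_uminus algebra_simps)
    moreover have "0 \<le> a + int k * c" using assms by simp
    ultimately show "0 \<le> (matS ** - ?W)$1$1" "(matS ** - ?W)$1$1 < (matS ** - ?W)$2$1"
      using assms by simp_all
  qed
  then have "S_equivariant ?W"
    using det_W by (simp add: S_equivariant_S S_equivariant_uminus det_uminus_2)
  then have "S_equivariant (mat2 1 1 0 1 ** ?Z)"
    using Suc.IH det_Z by (intro S_equivariant_T)
  moreover have "mat2 1 1 0 1 ** ?Z = mat2 1 (int (Suc k)) 0 1 ** mat2 a b c d"
    by (simp add: mat2_mult algebra_simps)
  ultimately show ?case by simp
qed

lemma S_equivariant_first_column_nonneg: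
  assumes "det Y = 1" and "0 < Y$2$1" and "0 \<le> Y$1$1"
  shows "S_equivariant Y"
proof -
  obtain a b c d where Y: "Y = mat2 a b c d" by (rule mat2_cases)
  have c: "0 < c" "0 \<le> a" using assms by (simp_all add: Y)
  define q where "q = a div c"
  have Y_eq: "Y = mat2 1 (int (nat q)) 0 1 ** mat2 (a mod c) (b - q * d) c d"
  proof -
    have "a = q * c + a mod c" by (simp add: q_def)
    moreover have "int (nat q) = q" using c by (simp add: q_def pos_imp_zdiv_nonneg_iff)
    ultimately show ?thesis by (simp add: Y mat2_mult algebra_simps)
  qed
  then have "det (mat2 (a mod c) (b - q * d) c d) = 1"
    using assms(1) by (simp add: det_mul)
  moreover have "0 \<le> a mod c" "a mod c < c" using c by simp_all
  ultimately show ?thesis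
    unfolding Y_eq by (rule S_equivariant_T_pow_reduced)
qed

lemma S_equivariant_lower_left_pos:
  assumes "det Y = 1" and "0 < Y$2$1"
  shows "S_equivariant Y"
proof (cases "0 \<le> Y$1$1")
  case True
  then show ?thesis using assms S_equivariant_first_column_nonneg by blast
next
  case False
  obtain a b c d where Y: "Y = mat2 a b c d" by (rule mat2_cases)
  have "S_equivariant (- (matS ** Y))"
  proof (rule S_equivariant_first_column_nonneg)
    show "det (- (matS ** Y)) = 1" using assms by (simp add: det_uminus_2 det_mul)
    have "- (matS ** Y) = mat2 c d (-a) (-b)"
      by (simp add: Y matS_eq mat2_mult mat2_uminus)
    then show "0 < (- (matS ** Y))$2$1" "0 \<le> (- (matS ** Y))$1$1"
      using False assms by (simp_all add: Y)
  qed
  then show ?thesis using assms by (simp add: S_equivariant_uminus S_equivariant_S det_mul)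
qed

lemma S_equivariant_of_det_one:
  assumes "det Y = 1"
  shows "S_equivariant Y"
proof -
  obtain a b c d where Y: "Y = mat2 a b c d" by (rule mat2_cases)
  consider "c = 0" | "0 < c" | "c < 0" by linarith
  then show ?thesis
  proof cases
    case 1
    then have "a = 1 \<or> a = -1" using det_one_lower_left_zero assms Y by blast
    then have "euclid_step (matS ** Y) = Y"
      using 1 by (auto simp: Y euclid_step_def matS_eq mat2_mult)
    with \<open>a = 1 \<or> a = -1\<close> show ?thesis
      using 1 by (auto simp: S_equivariant_def rep_step Y matS_eq mat2_mult)
  next
    case 2
    then show ?thesis using S_equivariant_lower_left_pos assms Y by simp
  next
    case 3
    then have "S_equivariant (- Y)"
      using assms by (intro S_equivariant_lower_left_pos) (simp_all add: Y det_uminus_2)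
    then show ?thesis using assms by (simp add: S_equivariant_uminus)
  qed
qed

lemma rep_mult:
  "det X = 1 \<Longrightarrow> det Z = 1 \<Longrightarrow> rep (X ** Z) = rep X * rep Z"
proof (induction X rule: rep.induct)
  case (1 X)
  obtain a b c d where X: "X = mat2 a b c d" by (rule mat2_cases)
  show ?case
  proof (cases "c = 0")
    case True
    then consider "a = 1" "d = 1" | "a = -1" "d = -1"
      using det_one_lower_left_zero "1.prems"(1) X by blast
    then show ?thesis
    proof cases
      case 1
      then show ?thesis using rep_T_pow_mult[OF "1.prems"(2), of b] True X by (simp add: rep_upper)
    next
      case 2
      then have "X = - mat2 1 (-b) 0 1" using True X by (simp add: mat2_uminus)
      then show ?thesis using rep_T_pow_mult[OF "1.prems"(2), of "-b"] 2 True "1.prems"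
        by (simp add: rep_upper matrix_mult_uminus_left rep_uminus det_mul)
    qed
  next
    case False
    let ?q = "a div c" and ?E = "euclid_step X"
    have det_E: "det ?E = 1" using "1.prems" det_euclid_step by simp
    have "rep (X ** Z) = rep (mat2 1 ?q 0 1 ** (matS ** (?E ** Z)))"
      using euclid_step_decomp[of X] by (simp add: X matrix_mul_assoc)
    also have "\<dots> = rep_T_pow ?q * (rep_S * rep (?E ** Z))"
      using S_equivariant_of_det_one[of "?E ** Z"] det_E "1.prems"(2)
      by (simp add: rep_T_pow_mult det_mul S_equivariant_def)
    also have "\<dots> = rep_T_pow ?q * (rep_S * (rep ?E * rep Z))"
      using "1.IH" False X det_E "1.prems"(2) by simp
    also have "\<dots> = rep X * rep Z"
      using rep_step[of X] False X by (simp add: mult.assoc)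
    finally show ?thesis .
  qed
qed

section \<open>Block upper triangular integer matrices\<close>

type_synonym imat = "nat \<Rightarrow> nat \<Rightarrow> int"

text \<open>Indices \<open>2i-1, 2i\<close> form the \<open>i\<close>-th block.\<close>
definition block :: "nat \<Rightarrow> nat" where "block n = (n + 1) div 2"

definition block_upper :: "imat \<Rightarrow> bool" where
  "block_upper X \<longleftrightarrow> (\<forall>m n. X m n \<noteq> 0 \<longrightarrow> 1 \<le> m \<and> 1 \<le> n \<and> block m \<le> block n)"

text \<open>The sum is truncated at \<open>2 * block n\<close>; this is the true matrix product whenever the
  right factor is \<open>block_upper\<close>.\<close>
definition imat_mult :: "imat \<Rightarrow> imat \<Rightarrow> imat" where
  "imat_mult X Y m n = (\<Sum>k\<in>{1..2 * block n}. X m k * Y k n)"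

definition imat_id :: imat where "imat_id m n = (if 1 \<le> m \<and> m = n then 1 else 0)"

lemma block_le_imp_le: "block k \<le> block n \<Longrightarrow> k \<le> 2 * block n"
  unfolding block_def by linarith

lemma block_mono: "k \<le> n \<Longrightarrow> block k \<le> block n"
  unfolding block_def by (simp add: div_le_mono)

lemma block_even [simp]: "block (2 * b) = b"
  and block_odd [simp]: "0 < b \<Longrightarrow> block (2 * b - Suc 0) = b"
  by (simp_all add: block_def)

lemma block_upperD: "block_upper X \<Longrightarrow> X m n \<noteq> 0 \<Longrightarrow> 1 \<le> m \<and> 1 \<le> n \<and> block m \<le> block n"
  unfolding block_upper_def by blast

lemma block_upper_zero_below: "block_upper X \<Longrightarrow> 2 * block n < k \<Longrightarrow> X k n = 0"
  using block_upperD block_le_imp_le by fastforce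

lemma block_upper_mult: "block_upper X \<Longrightarrow> block_upper Y \<Longrightarrow> block_upper (imat_mult X Y)"
  unfolding block_upper_def imat_mult_def
  by (smt (verit, ccfv_threshold) dual_order.trans mult_eq_0_iff sum.neutral)

lemma block_upper_id: "block_upper imat_id"
  by (auto simp: block_upper_def imat_id_def)

lemma imat_mult_eq_sum_superset:
  assumes "block_upper Y" "finite A" "{1..2 * block n} \<subseteq> A"
  shows "imat_mult X Y m n = (\<Sum>k\<in>A. X m k * Y k n)"
  unfolding imat_mult_def
proof (rule sum.mono_neutral_left[OF assms(2) assms(3)])
  show "\<forall>i\<in>A - {1..2 * block n}. X m i * Y i n = 0"
    using block_upperD[OF assms(1)] block_le_imp_le by fastforce
qed

lemma imat_mult_eq_sum:
  assumes "block_upper Y" "finite A"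
    and "\<forall>k\<in>{1..2 * block n} - A. X m k * Y k n = 0" "\<forall>k\<in>A - {1..2 * block n}. Y k n = 0"
  shows "imat_mult X Y m n = (\<Sum>k\<in>A. X m k * Y k n)"
proof -
  have "imat_mult X Y m n = (\<Sum>k\<in>A \<union> {1..2 * block n}. X m k * Y k n)"
    using assms by (intro imat_mult_eq_sum_superset) auto
  also have "\<dots> = (\<Sum>k\<in>A. X m k * Y k n)"
    using assms by (intro sum.mono_neutral_right) auto
  finally show ?thesis .
qed

lemma sum_in_pairs: "(\<Sum>k\<in>{1..2 * (L::nat)}. g k) = (\<Sum>b\<in>{1..L}. g (2 * b - 1) + g (2 * b))"
proof (induction L)
  case (Suc L)
  have "{1..2 * Suc L} = {1..2 * L} \<union> {2 * L + 1, 2 * L + 2}" by auto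
  then have "(\<Sum>k\<in>{1..2 * Suc L}. g k) = (\<Sum>k\<in>{1..2 * L}. g k) + (g (2 * L + 1) + g (2 * L + 2))"
    by (simp only: sum.union_disjoint) (simp add: ac_simps)
  then show ?case using Suc by (simp add: ac_simps)
qed simp

lemma imat_mult_by_blocks:
  "imat_mult X Y m n = (\<Sum>b\<in>{1..block n}. X m (2 * b - 1) * Y (2 * b - 1) n
      + X m (2 * b) * Y (2 * b) n)"
  unfolding imat_mult_def by (rule sum_in_pairs)

lemma imat_mult_cong_col: "(\<And>k. Y k n = Y' k n) \<Longrightarrow> imat_mult X Y m n = imat_mult X Y' m n"
  by (simp add: imat_mult_def)

lemma imat_mult_assoc:
  assumes "block_upper Y" "block_upper Z"
  shows "imat_mult (imat_mult X Y) Z = imat_mult X (imat_mult Y Z)"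
proof (intro ext)
  fix m n
  let ?A = "{1..2 * block n}"
  have inner: "imat_mult X Y m k = (\<Sum>l\<in>?A. X m l * Y l k)" if "Z k n \<noteq> 0" for k
  proof (rule imat_mult_eq_sum_superset[OF assms(1)])
    show "{1..2 * block k} \<subseteq> ?A" using block_upperD[OF assms(2) that] by auto
  qed simp
  have "imat_mult (imat_mult X Y) Z m n = (\<Sum>k\<in>?A. (\<Sum>l\<in>?A. X m l * Y l k) * Z k n)"
    unfolding imat_mult_def[of "imat_mult X Y"]
    by (intro sum.cong refl, rename_tac k, case_tac "Z k n = 0") (simp_all add: inner)
  also have "\<dots> = (\<Sum>l\<in>?A. X m l * (\<Sum>k\<in>?A. Y l k * Z k n))"
    by (simp add: sum_distrib_left sum_distrib_right mult.assoc) (rule sum.swap)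
  also have "\<dots> = imat_mult X (imat_mult Y Z) m n" by (simp add: imat_mult_def)
  finally show "imat_mult (imat_mult X Y) Z m n = imat_mult X (imat_mult Y Z) m n" .
qed

lemma imat_mult_add_left:
  "imat_mult (\<lambda>m n. X m n + Y m n) Z = (\<lambda>m n. imat_mult X Z m n + imat_mult Y Z m n)"
  unfolding imat_mult_def by (intro ext) (simp add: distrib_right sum.distrib)

lemma imat_mult_add_right:
  "imat_mult X (\<lambda>m n. Y m n + Z m n) = (\<lambda>m n. imat_mult X Y m n + imat_mult X Z m n)"
  unfolding imat_mult_def by (intro ext) (simp add: distrib_left sum.distrib)

lemma imat_mult_diff_right:
  "imat_mult X (\<lambda>m n. Y m n - Z m n) = (\<lambda>m n. imat_mult X Y m n - imat_mult X Z m n)"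
  unfolding imat_mult_def by (intro ext) (simp add: right_diff_distrib sum_subtractf)

lemma imat_mult_id_left: "block_upper Y \<Longrightarrow> imat_mult imat_id Y = Y"
proof (intro ext)
  fix m n assume bu: "block_upper Y"
  show "imat_mult imat_id Y m n = Y m n"
  proof (cases "m \<in> {1..2 * block n}")
    case True
    then show ?thesis unfolding imat_mult_def imat_id_def
      by (simp add: if_distrib[of "\<lambda>x. x * _"] sum.delta cong: if_cong)
  next
    case False
    then have "Y m n = 0" using block_upperD[OF bu, of m n] block_le_imp_le by fastforce
    moreover have "imat_mult imat_id Y m n = 0"
      unfolding imat_mult_def imat_id_def using False by (intro sum.neutral) auto
    ultimately show ?thesis by simp
  qed
qed

lemma imat_mult_id_right: "block_upper X \<Longrightarrow> imat_mult X imat_id = X"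
proof (intro ext)
  fix m n assume bu: "block_upper X"
  show "imat_mult X imat_id m n = X m n"
  proof (cases "n \<ge> 1")
    case True
    then have "n \<in> {1..2 * block n}" unfolding block_def by auto
    then show ?thesis unfolding imat_mult_def imat_id_def
      by (simp add: if_distrib[of "\<lambda>x. _ * x"] sum.delta' cong: if_cong)
  next
    case False
    then have "X m n = 0" using block_upperD[OF bu, of m n] by fastforce
    moreover have "imat_mult X imat_id m n = 0"
      unfolding imat_mult_def imat_id_def using False by (intro sum.neutral) auto
    ultimately show ?thesis by simp
  qed
qed

lemma nat_block_cases:
  fixes n :: nat
  obtains "n = 0" | L where "1 \<le> L" "n = 2 * L" | L where "1 \<le> L" "n = 2 * L - 1"
proof (cases "even n")
  case True
  then obtain L where "n = 2 * L" by (auto elim: evenE)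
  then show ?thesis using that(1,2) by (cases "L = 0") auto
next
  case False
  then obtain L where "n = 2 * L + 1" by (auto elim: oddE)
  then show ?thesis using that(3)[of "L + 1"] by simp
qed

definition shift :: imat where
  "shift m n = (if 1 \<le> m \<and> n = m + 1 then 1 else 0)"

lemma block_upper_shift: "block_upper shift"
  by (auto simp: block_upper_def shift_def block_mono)

lemma shift_mult: "block_upper Y \<Longrightarrow> imat_mult shift Y m n = (if 1 \<le> m then Y (m + 1) n else 0)"
proof (cases "1 \<le> m")
  case True
  assume bu: "block_upper Y"
  have "\<not> Suc m \<le> 2 * block n \<Longrightarrow> Y (Suc m) n = 0"
    using block_upper_zero_below[OF bu] by simp
  then have "imat_mult shift Y m n = (\<Sum>k\<in>{m + 1}. shift m k * Y k n)"
    by (intro imat_mult_eq_sum[OF bu]) (auto simp: shift_def)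
  then show ?thesis using True by (simp add: shift_def)
qed (simp add: imat_mult_def shift_def)

lemma mult_shift: "imat_mult X shift m n = (if 2 \<le> n then X m (n - 1) else 0)"
proof (cases "2 \<le> n")
  case True
  have "n - 1 \<le> 2 * block n" unfolding block_def by linarith
  then have "imat_mult X shift m n = (\<Sum>k\<in>{n - 1}. X m k * shift k n)"
    using True by (intro imat_mult_eq_sum[OF block_upper_shift]) (auto simp: shift_def)
  then show ?thesis using True by (simp add: shift_def)
next
  case False
  then show ?thesis unfolding imat_mult_def by (auto simp: shift_def intro: sum.neutral)
qed

section \<open>Block Toeplitz matrices\<close>

text \<open>Rows and columns of an \<open>fmat\<close> are indexed by booleans, \<open>True\<close> being the first.\<close>
definition entry :: "fmat \<Rightarrow> bool \<Rightarrow> bool \<Rightarrow> int fps" where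
  "entry M i j = (if i then (if j then e11 M else e12 M) else (if j then e21 M else e22 M))"

text \<open>The block Toeplitz matrix of \<open>M = \<Sum>\<^sub>k M\<^sub>k x\<^sup>k\<close>: block \<open>(i, j)\<close> is \<open>M\<^sub>j\<^sub>-\<^sub>i\<close> for \<open>i \<le> j\<close>,
  with the two coordinates of every block listed in reverse order (the even index \<open>2i\<close> carries the
  first one).\<close>
definition toeplitz :: "fmat \<Rightarrow> imat" where
  "toeplitz M m n = (if 1 \<le> m \<and> 1 \<le> n \<and> block m \<le> block n
     then fps_nth (entry M (even m) (even n)) (block n - block m) else 0)"

lemma entry_mult: "entry (A * B) i j = entry A i True * entry B True j
    + entry A i False * entry B False j"
  by (simp add: entry_def)

lemma entry_add: "entry (A + B) i j = entry A i j + entry B i j"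
  by (simp add: entry_def)

lemma block_upper_toeplitz: "block_upper (toeplitz M)"
  by (auto simp: block_upper_def toeplitz_def split: if_splits)

lemma toeplitz_even_col:
  "1 \<le> L \<Longrightarrow> toeplitz M m (2 * L) =
    (if 1 \<le> m \<and> block m \<le> L then fps_nth (entry M (even m) True) (L - block m) else 0)"
  by (simp add: toeplitz_def)

lemma toeplitz_odd_col:
  "1 \<le> L \<Longrightarrow> toeplitz M m (2 * L - 1) =
    (if 1 \<le> m \<and> block m \<le> L then fps_nth (entry M (even m) False) (L - block m) else 0)"
  by (auto simp: toeplitz_def)

lemma toeplitz_entry:
  assumes "0 < b" "0 < L"
  shows "toeplitz M (2 * b - 1) (2 * L) =
      (if b \<le> L then fps_nth (entry M False True) (L - b) else 0)"
    and "toeplitz M (2 * b) (2 * L) = (if b \<le> L then fps_nth (entry M True True) (L - b) else 0)"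
    and "toeplitz M (2 * b - 1) (2 * L - 1) =
      (if b \<le> L then fps_nth (entry M False False) (L - b) else 0)"
    and "toeplitz M (2 * b) (2 * L - 1) =
      (if b \<le> L then fps_nth (entry M True False) (L - b) else 0)"
  using assms by (auto simp: toeplitz_def)

lemma sum_shift_from:
  fixes l L :: nat and h :: "nat \<Rightarrow> 'a::comm_monoid_add"
  assumes "1 \<le> l" "l \<le> L"
  shows "(\<Sum>b\<in>{1..L}. (if l \<le> b then h (b - l) else 0)) = (\<Sum>i\<in>{0..L - l}. h i)"
proof -
  have "(\<Sum>b\<in>{1..L}. (if l \<le> b then h (b - l) else 0)) = (\<Sum>b\<in>{l..L}. h (b - l))"
    using assms by (intro sum.mono_neutral_cong_right) auto
  also have "\<dots> = (\<Sum>b\<in>{0 + l..(L - l) + l}. h (b - l))" using assms by simp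
  also have "\<dots> = (\<Sum>i\<in>{0..L - l}. h i)" by (subst sum.shift_bounds_cl_nat_ivl) simp
  finally show ?thesis .
qed

lemma toeplitz_mult: "imat_mult (toeplitz A) (toeplitz B) = toeplitz (A * B)"
proof (intro ext)
  fix m n
  show "imat_mult (toeplitz A) (toeplitz B) m n = toeplitz (A * B) m n"
  proof (cases "1 \<le> m \<and> 1 \<le> n \<and> block m \<le> block n")
    case False
    then have "imat_mult (toeplitz A) (toeplitz B) m n = 0"
      unfolding imat_mult_def by (intro sum.neutral) (auto simp: toeplitz_def)
    then show ?thesis using False by (auto simp: toeplitz_def)
  next
    case True
    define l L where "l = block m" and "L = block n"
    have lL: "1 \<le> l" "l \<le> L" using True unfolding l_def L_def block_def by auto
    define a1 a2 c1 c2 where "a1 = entry A (even m) True" and "a2 = entry A (even m) False"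
      and "c1 = entry B True (even n)" and "c2 = entry B False (even n)"
    let ?h = "\<lambda>i. fps_nth a2 i * fps_nth c2 (L - l - i) + fps_nth a1 i * fps_nth c1 (L - l - i)"
    have "imat_mult (toeplitz A) (toeplitz B) m n = (\<Sum>b\<in>{1..L}.
        toeplitz A m (2 * b - 1) * toeplitz B (2 * b - 1) n
          + toeplitz A m (2 * b) * toeplitz B (2 * b) n)"
      unfolding L_def by (rule imat_mult_by_blocks)
    also have "\<dots> = (\<Sum>b\<in>{1..L}. (if l \<le> b then ?h (b - l) else 0))"
    proof (rule sum.cong[OF refl])
      fix b assume "b \<in> {1..L}"
      then have b: "1 \<le> b" "b \<le> L" by auto
      then have "L - b = L - l - (b - l)" if "l \<le> b" using that by simp
      then show "toeplitz A m (2 * b - 1) * toeplitz B (2 * b - 1) n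
          + toeplitz A m (2 * b) * toeplitz B (2 * b) n = (if l \<le> b then ?h (b - l) else 0)"
        using b True
        by (auto simp: toeplitz_def l_def[symmetric] L_def[symmetric] a1_def a2_def c1_def c2_def)
    qed
    also have "\<dots> = (\<Sum>i\<in>{0..L - l}. ?h i)" by (rule sum_shift_from[OF lL])
    also have "\<dots> = fps_nth (a2 * c2) (L - l) + fps_nth (a1 * c1) (L - l)"
      by (simp add: fps_mult_nth sum.distrib)
    also have "\<dots> = toeplitz (A * B) m n"
      using True by (simp add: toeplitz_def entry_mult l_def[symmetric] L_def[symmetric]
          a1_def a2_def c1_def c2_def)
    finally show ?thesis .
  qed
qed

lemma block_parity_inj: "block m = block n \<Longrightarrow> even m = even n \<Longrightarrow> m = n"
  unfolding block_def by (auto elim!: evenE oddE)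

lemma toeplitz_one: "toeplitz 1 = imat_id"
proof (intro ext)
  fix m n :: nat
  have "entry 1 (even m) (even n) = (if even m = even n then 1 else 0)"
    by (auto simp: entry_def)
  then show "toeplitz 1 m n = imat_id m n"
    using block_parity_inj[of m n] by (auto simp: toeplitz_def imat_id_def)
qed

lemma toeplitz_add: "toeplitz (A + B) = (\<lambda>m n. toeplitz A m n + toeplitz B m n)"
  by (intro ext) (simp add: toeplitz_def entry_add)

section \<open>The binomial conjugation\<close>

definition rep_N :: fmat where "rep_N = rep_T - 1"

lemma entry_rep_N [simp]:
  "entry rep_N True True = 0" "entry rep_N True False = fps_X"
  "entry rep_N False True = 1" "entry rep_N False False = fps_X"
  by (simp_all add: entry_def rep_N_def rep_T_def)

lemma mult_toeplitz_rep_N_even: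
  assumes "1 \<le> L"
  shows "imat_mult X (toeplitz rep_N) m (2 * L) = X m (2 * L - 1)"
proof -
  have "imat_mult X (toeplitz rep_N) m (2 * L) = (\<Sum>b\<in>{1..L}. if b = L then X m (2 * L - 1) else 0)"
    unfolding imat_mult_by_blocks using assms
    using toeplitz_entry[of _ L rep_N] by (intro sum.cong) auto
  then show ?thesis using assms by simp
qed

lemma mult_toeplitz_rep_N_odd:
  assumes "1 \<le> L"
  shows "imat_mult X (toeplitz rep_N) m (2 * L - 1) =
    (if 2 \<le> L then X m (2 * L - 3) + X m (2 * L - 2) else 0)"
proof -
  have "imat_mult X (toeplitz rep_N) m (2 * L - 1)
      = (\<Sum>b\<in>{1..L}. if b = L - 1 then X m (2 * b - 1) + X m (2 * b) else 0)"
    unfolding imat_mult_by_blocks using assms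
    using toeplitz_entry[of _ L rep_N] by (intro sum.cong) auto
  then show ?thesis
    using assms by (auto simp: sum.delta' algebra_simps numeral_2_eq_2 numeral_3_eq_3)
qed

definition binom_mat :: imat where
  "binom_mat m n = (if 1 \<le> m \<and> m \<le> n then int (block n choose (n - m)) else 0)"

lemma block_upper_binom_mat: "block_upper binom_mat"
  by (auto simp: block_upper_def binom_mat_def block_mono split: if_splits)

lemma binom_mat_even_col:
  "1 \<le> m \<Longrightarrow> 1 \<le> L \<Longrightarrow> binom_mat m (2 * L - 1) = binom_mat (m + 1) (2 * L)"
  by (auto simp: binom_mat_def)

lemma binom_mat_pascal:
  assumes "1 \<le> m" "2 \<le> L"
  shows "binom_mat m (2 * L - 3) + binom_mat m (2 * L - 2) = binom_mat (m + 1) (2 * L - 1)"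
proof -
  have blocks: "block (2 * L - 3) = L - 1" "block (2 * L - 2) = L - 1"
    using assms unfolding block_def by linarith+
  consider "m \<le> 2 * L - 3" | "m = 2 * L - 2" | "2 * L - 2 < m" by linarith
  then show ?thesis
  proof cases
    case 1
    have "2 * L - 1 - (m + 1) = Suc (2 * L - 3 - m)" "2 * L - 2 - m = Suc (2 * L - 3 - m)"
      "L = Suc (L - 1)"
      using assms 1 by linarith+
    then have "(L choose (2 * L - 1 - (m + 1)))
        = ((L - 1) choose (2 * L - 3 - m)) + ((L - 1) choose (2 * L - 2 - m))"
      by (metis binomial_Suc_Suc)
    moreover have "m \<le> 2 * L - 2" "m + 1 \<le> 2 * L - 1" using 1 assms by linarith+
    ultimately show ?thesis using assms 1 by (simp add: binom_mat_def blocks)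
  next
    case 2
    then show ?thesis using assms by (auto simp: binom_mat_def blocks)
  next
    case 3
    then show ?thesis using assms by (auto simp: binom_mat_def blocks)
  qed
qed

lemma binom_mat_mult_rep_N: "imat_mult binom_mat (toeplitz rep_N) = imat_mult shift binom_mat"
proof (intro ext)
  fix m n
  have "imat_mult binom_mat (toeplitz rep_N) m n = (if 1 \<le> m then binom_mat (m + 1) n else 0)"
  proof (cases "1 \<le> m")
    case False
    then show ?thesis by (simp add: imat_mult_def binom_mat_def)
  next
    case True
    show ?thesis
    proof (cases n rule: nat_block_cases)
      case 1
      then show ?thesis by (simp add: imat_mult_def binom_mat_def block_def)
    next
      case (2 L)
      then show ?thesis
        using True binom_mat_even_col[of m L] by (simp add: mult_toeplitz_rep_N_even)
    next
      case (3 L)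
      show ?thesis
      proof (cases "2 \<le> L")
        case True
        then show ?thesis
          using 3 \<open>1 \<le> m\<close> binom_mat_pascal[of m L] mult_toeplitz_rep_N_odd[of L binom_mat m]
          by simp
      next
        case False
        then show ?thesis using 3 mult_toeplitz_rep_N_odd[of L binom_mat m]
          by (auto simp: binom_mat_def)
      qed
    qed
  qed
  then show "imat_mult binom_mat (toeplitz rep_N) m n = imat_mult shift binom_mat m n"
    by (simp add: shift_mult[OF block_upper_binom_mat])
qed

lemma rep_T_inv_pow_commute: "rep_T_inv ^ L * rep_T = rep_T * rep_T_inv ^ L"
proof -
  have "rep_T_inv * rep_T = rep_T * rep_T_inv" by (simp add: rep_T_inverse)
  then show ?thesis by (rule power_commuting_commutes)
qed

lemma rep_N_commute: "rep_N * rep_T_inv ^ L = rep_T_inv ^ L * rep_N"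
  by (simp add: rep_N_def algebra_simps rep_T_inv_pow_commute)

lemma toeplitz_mult_rep_N_even:
  "1 \<le> L \<Longrightarrow> toeplitz (M * rep_N) m (2 * L) = toeplitz M m (2 * L - 1)"
  using toeplitz_odd_col[of L M m] by (simp add: toeplitz_even_col entry_mult)

lemma toeplitz_mult_rep_N_odd:
  assumes "2 \<le> L"
  shows "toeplitz (M * rep_N) m (2 * L - 1) = toeplitz (M * rep_T) m (2 * (L - 1))"
proof -
  have "entry (M * rep_N) i False = fps_X * entry (M * rep_T) i True" for i
    by (simp add: entry_def rep_N_def rep_T_def distrib_left)
  moreover have "L - block m = Suc (L - 1 - block m)" if "block m \<le> L - 1" for m
    using that assms by linarith
  ultimately show ?thesis
    using assms toeplitz_odd_col[of L "M * rep_N" m] toeplitz_even_col[of "L - 1" "M * rep_T" m]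
    by (auto simp: not_le le_Suc_eq)
qed

lemma toeplitz_mult_rep_N_first: "toeplitz (M * rep_N) m 1 = 0"
  by (auto simp: toeplitz_def block_def entry_def rep_N_def rep_T_def)

text \<open>The inverse of \<open>binom_mat\<close>. Column \<open>n\<close> is taken from the power \<open>\<rho>(T)\<^sup>-\<^sup>k\<close>, \<open>k = block n\<close>;
  since it commutes with \<open>rep_N\<close>, left multiplication by \<open>toeplitz rep_N\<close> becomes a shift of
  columns.\<close>
definition binom_inv :: imat where
  "binom_inv m n = toeplitz (rep_T_inv ^ block n) m n"

lemma block_upper_binom_inv: "block_upper binom_inv"
  using block_upper_toeplitz by (auto simp: block_upper_def binom_inv_def)

lemma toeplitz_rep_N_mult_binom_inv: "imat_mult (toeplitz rep_N) binom_inv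
    = imat_mult binom_inv shift"
proof (intro ext)
  fix m n
  have "imat_mult (toeplitz rep_N) binom_inv m n = toeplitz (rep_T_inv ^ block n * rep_N) m n"
  proof -
    have "imat_mult (toeplitz rep_N) binom_inv m n
        = imat_mult (toeplitz rep_N) (toeplitz (rep_T_inv ^ block n)) m n"
      by (rule imat_mult_cong_col) (simp add: binom_inv_def)
    then show ?thesis by (simp add: toeplitz_mult rep_N_commute)
  qed
  also have "\<dots> = (if 2 \<le> n then binom_inv m (n - 1) else 0)"
  proof (cases n rule: nat_block_cases)
    case 1
    then show ?thesis by (simp add: toeplitz_def)
  next
    case (2 L)
    then show ?thesis
      using toeplitz_mult_rep_N_even[of L "rep_T_inv ^ L" m] by (simp add: binom_inv_def)
  next
    case (3 L)
    show ?thesis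
    proof (cases "L = 1")
      case True
      then show ?thesis using 3 toeplitz_mult_rep_N_first by simp
    next
      case False
      obtain k where k: "L = Suc k" using 3 by (cases L) auto
      have "rep_T_inv ^ L * rep_T = rep_T_inv ^ (L - 1)"
        by (simp only: k power_Suc2 mult.assoc rep_T_inverse(2) mult_1_right diff_Suc_1)
      moreover have "n - 1 = 2 * (L - 1)" "2 \<le> n" using 3 False by auto
      ultimately show ?thesis
        using 3 False toeplitz_mult_rep_N_odd[of L "rep_T_inv ^ L" m] by (simp add: binom_inv_def)
    qed
  qed
  also have "\<dots> = imat_mult binom_inv shift m n"
    by (simp add: mult_shift)
  finally show "imat_mult (toeplitz rep_N) binom_inv m n = imat_mult binom_inv shift m n" .
qed

lemma toeplitz_first_rows:
  "toeplitz M 1 n + toeplitz M 2 n + toeplitz M 3 n = toeplitz (FMat 1 (1 + fps_X) 0 0 * M) 2 n"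
proof (cases "n = 0")
  case False
  have "block 1 = 1" "block 2 = 1" "block 3 = 2" "1 \<le> block n"
    using False by (simp_all add: block_def)
  moreover have "block n - Suc (Suc 0) = block n - 2" by simp
  ultimately show ?thesis
    using False by (auto simp: toeplitz_def entry_def algebra_simps)
qed (simp add: toeplitz_def)

lemma rep_T_inv_pow_second_row:
  "k < j \<Longrightarrow> fps_nth (e21 (rep_T_inv ^ Suc k)) j = 0 \<and> fps_nth (e22 (rep_T_inv ^ Suc k)) j = 0"
proof (induction k arbitrary: j)
  case 0
  then show ?case by (simp add: rep_T_inv_def)
next
  case (Suc k)
  let ?A = "rep_T_inv ^ Suc k"
  have "rep_T_inv ^ Suc (Suc k) = ?A * rep_T_inv" by (rule power_Suc2)
  moreover have "fps_nth (e21 ?A) i = 0" "fps_nth (e22 ?A) i = 0" if "k < i" for i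
    using Suc.IH that by blast+
  ultimately show ?case
    using Suc.prems by (simp add: rep_T_inv_def algebra_simps)
qed

lemma binom_mat_first_row: "binom_mat (Suc 0) k = (if k \<in> {1, 2, 3} then 1 else 0)"
proof -
  have "block k < k - 1" if "k \<notin> {1, 2, 3}" "k \<noteq> 0" using that unfolding block_def by auto
  then show ?thesis by (auto simp: binom_mat_def block_def)
qed

lemma binom_mat_mult_binom_inv_first_row: "imat_mult binom_mat binom_inv 1 n = imat_id 1 n"
proof -
  define L where "L = block n"
  have "imat_mult binom_mat binom_inv 1 n = (\<Sum>k\<in>{1, 2, 3}. binom_mat 1 k * binom_inv k n)"
    by (intro imat_mult_eq_sum[OF block_upper_binom_inv])
      (auto simp: binom_mat_first_row block_upper_zero_below[OF block_upper_binom_inv])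
  also have "\<dots> = toeplitz (FMat 1 (1 + fps_X) 0 0 * rep_T_inv ^ L) 2 n"
    by (simp add: binom_mat_first_row binom_inv_def toeplitz_first_rows[symmetric] L_def)
  also have "\<dots> = imat_id 1 n"
  proof (cases "n = 0")
    case True
    then show ?thesis by (simp add: toeplitz_def imat_id_def)
  next
    case False
    then have L: "1 \<le> L" by (simp add: L_def block_def)
    have "FMat 1 (1 + fps_X) 0 0 * rep_T_inv ^ L = FMat 0 1 0 0 * rep_T_inv ^ (L - 1)"
    proof -
      have "FMat 1 (1 + fps_X) 0 0 * rep_T_inv = FMat 0 1 0 0"
        by (rule fmat_eqI) (simp_all add: rep_T_inv_def algebra_simps)
      moreover have "rep_T_inv ^ L = rep_T_inv * rep_T_inv ^ (L - 1)"
        using L by (metis Suc_diff_1 less_le_trans power_Suc zero_less_one)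
      ultimately show ?thesis by (simp add: mult.assoc[symmetric])
    qed
    then have "toeplitz (FMat 1 (1 + fps_X) 0 0 * rep_T_inv ^ L) 2 n
        = fps_nth (entry (rep_T_inv ^ (L - 1)) False (even n)) (L - 1)"
      using False L by (simp add: toeplitz_def entry_def L_def[symmetric] block_def[of 2])
    also have "\<dots> = imat_id 1 n"
    proof (cases "L = 1")
      case True
      then have "n = 1 \<or> n = 2" using False by (auto simp: L_def block_def)
      then show ?thesis using True by (auto simp: entry_def imat_id_def)
    next
      case False
      then obtain k where k: "L - 1 = Suc k" using L by (cases "L - 1") auto
      then have "n \<noteq> 1" by (auto simp: L_def block_def)
      moreover have "fps_nth (entry (rep_T_inv ^ (L - 1)) False (even n)) (L - 1) = 0"
        unfolding k entry_def using rep_T_inv_pow_second_row[of k "Suc k"] by simp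
      ultimately show ?thesis by (simp add: imat_id_def)
    qed
    finally show ?thesis .
  qed
  finally show ?thesis .
qed

lemma binom_mat_mult_binom_inv_commutes_shift:
  "imat_mult shift (imat_mult binom_mat binom_inv)
    = imat_mult (imat_mult binom_mat binom_inv) shift"
proof -
  have "imat_mult shift (imat_mult binom_mat binom_inv)
      = imat_mult (imat_mult shift binom_mat) binom_inv"
    by (simp add: imat_mult_assoc block_upper_binom_mat block_upper_binom_inv)
  also have "\<dots> = imat_mult (imat_mult binom_mat (toeplitz rep_N)) binom_inv"
    by (simp add: binom_mat_mult_rep_N)
  also have "\<dots> = imat_mult binom_mat (imat_mult binom_inv shift)"
    by (simp add: imat_mult_assoc block_upper_toeplitz block_upper_binom_inv
        toeplitz_rep_N_mult_binom_inv)
  also have "\<dots> = imat_mult (imat_mult binom_mat binom_inv) shift"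
    by (simp add: imat_mult_assoc block_upper_binom_inv block_upper_shift)
  finally show ?thesis .
qed

text \<open>A block upper matrix commuting with \<open>shift\<close> is constant along diagonals, so it is
  determined by its first row.\<close>
lemma binom_mat_mult_binom_inv: "imat_mult binom_mat binom_inv = imat_id"
proof -
  let ?RP = "imat_mult binom_mat binom_inv"
  have bu: "block_upper ?RP"
    by (simp add: block_upper_mult block_upper_binom_mat block_upper_binom_inv)
  have "?RP m n = imat_id m n" for m n
  proof (induction m arbitrary: n)
    case 0
    then show ?case by (simp add: imat_mult_def binom_mat_def imat_id_def)
  next
    case (Suc m)
    show ?case
    proof (cases "m = 0")
      case True
      then show ?thesis using binom_mat_mult_binom_inv_first_row by simp
    next
      case False
      have "?RP (Suc m) n = imat_mult shift ?RP m n"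
        using shift_mult[OF bu, of m n] False by simp
      also have "\<dots> = imat_mult ?RP shift m n"
        by (simp add: binom_mat_mult_binom_inv_commutes_shift)
      also have "\<dots> = imat_id (Suc m) n"
        using Suc.IH False by (auto simp: mult_shift imat_id_def)
      finally show ?thesis .
    qed
  qed
  then show ?thesis by (intro ext)
qed

text \<open>\<open>binom_mat\<close> is upper unitriangular, hence cancellable on the left.\<close>
lemma binom_mat_mult_eq_0:
  assumes bu: "block_upper Z" and zero: "imat_mult binom_mat Z = (\<lambda>m n. 0)"
  shows "Z = (\<lambda>m n. 0)"
proof (rule ccontr)
  assume "Z \<noteq> (\<lambda>m n. 0)"
  then obtain m0 n where "Z m0 n \<noteq> 0" by (auto simp: fun_eq_iff)
  define S where "S = {k. Z k n \<noteq> 0}"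
  have S: "S \<subseteq> {1..2 * block n}"
    using block_upperD[OF bu] block_le_imp_le by (auto simp: S_def)
  then have "finite S" by (rule finite_subset) simp
  moreover have "S \<noteq> {}" using \<open>Z m0 n \<noteq> 0\<close> by (auto simp: S_def)
  ultimately have k0: "Max S \<in> S" by (rule Max_in)
  have above: "Z k n = 0" if "Max S < k" for k
  proof (rule ccontr)
    assume "Z k n \<noteq> 0"
    then have "k \<le> Max S" using Max_ge[OF \<open>finite S\<close>] by (simp add: S_def)
    then show False using that by simp
  qed
  have "imat_mult binom_mat Z (Max S) n
      = (\<Sum>k\<in>{1..2 * block n}. if k = Max S then Z (Max S) n else 0)"
    unfolding imat_mult_def
  proof (intro sum.cong refl)
    fix k assume "k \<in> {1..2 * block n}"
    then show "binom_mat (Max S) k * Z k n = (if k = Max S then Z (Max S) n else 0)"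
      using above[of k] by (cases k "Max S" rule: linorder_cases) (auto simp: binom_mat_def)
  qed
  also have "\<dots> = Z (Max S) n" using k0 S by auto
  finally show False using k0 zero by (auto simp: S_def fun_eq_iff)
qed

lemma binom_inv_mult_binom_mat: "imat_mult binom_inv binom_mat = imat_id"
proof -
  let ?D = "\<lambda>m n. imat_mult binom_inv binom_mat m n - imat_id m n"
  have "imat_mult binom_mat (imat_mult binom_inv binom_mat) = binom_mat"
    by (simp add: imat_mult_assoc[symmetric] block_upper_binom_inv block_upper_binom_mat
        binom_mat_mult_binom_inv imat_mult_id_left)
  then have "imat_mult binom_mat ?D = (\<lambda>m n. 0)"
    by (simp add: imat_mult_diff_right imat_mult_id_right block_upper_binom_mat)
  moreover have "block_upper ?D"
    unfolding block_upper_def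
  proof (intro allI impI)
    fix m n assume "?D m n \<noteq> 0"
    then have "imat_mult binom_inv binom_mat m n \<noteq> 0 \<or> imat_id m n \<noteq> 0" by auto
    then show "1 \<le> m \<and> 1 \<le> n \<and> block m \<le> block n"
      using block_upperD[OF block_upper_mult[OF block_upper_binom_inv block_upper_binom_mat]]
        block_upperD[OF block_upper_id] by blast
  qed
  ultimately have "?D = (\<lambda>m n. 0)" by (rule binom_mat_mult_eq_0[rotated])
  then show ?thesis by (simp add: fun_eq_iff)
qed

section \<open>The representation on \<open>E\<close>\<close>

definition tau_int :: "int^2^2 \<Rightarrow> imat" where
  "tau_int Y = imat_mult binom_mat (imat_mult (toeplitz (rep Y)) binom_inv)"

lemma block_upper_toeplitz_mult_binom_inv: "block_upper (imat_mult (toeplitz M) binom_inv)"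
  by (simp add: block_upper_mult block_upper_toeplitz block_upper_binom_inv)

lemma block_upper_tau_int: "block_upper (tau_int Y)"
  by (simp add: tau_int_def block_upper_mult block_upper_binom_mat
      block_upper_toeplitz_mult_binom_inv)

lemma tau_int_mult:
  assumes "det X = 1" "det Y = 1"
  shows "tau_int (X ** Y) = imat_mult (tau_int X) (tau_int Y)"
proof -
  let ?A = "toeplitz (rep X)" and ?B = "toeplitz (rep Y)"
  have "imat_mult (tau_int X) (tau_int Y)
      = imat_mult binom_mat (imat_mult ?A
          (imat_mult (imat_mult binom_inv binom_mat) (imat_mult ?B binom_inv)))"
    by (simp add: tau_int_def imat_mult_assoc block_upper_toeplitz_mult_binom_inv block_upper_tau_int
        block_upper_binom_mat block_upper_binom_inv block_upper_mult block_upper_toeplitz)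
  also have "\<dots> = imat_mult binom_mat (imat_mult (imat_mult ?A ?B) binom_inv)"
    by (simp add: binom_inv_mult_binom_mat imat_mult_id_left block_upper_toeplitz_mult_binom_inv
        imat_mult_assoc block_upper_toeplitz block_upper_binom_inv)
  also have "\<dots> = tau_int (X ** Y)"
    by (simp add: tau_int_def toeplitz_mult rep_mult[OF assms])
  finally show ?thesis by simp
qed

lemma tau_int_id: "tau_int (mat2 1 0 0 1) = imat_id"
  by (simp add: tau_int_def rep_upper toeplitz_one imat_mult_id_left block_upper_binom_inv
      binom_mat_mult_binom_inv)

lemma tau_int_T: "tau_int matT = (\<lambda>m n. imat_id m n + shift m n)"
proof -
  have "rep matT = 1 + rep_N" by (simp add: matT_eq rep_upper rep_N_def)
  then have "imat_mult (toeplitz (rep matT)) binom_inv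
      = (\<lambda>m n. binom_inv m n + imat_mult binom_inv shift m n)"
    by (simp add: toeplitz_add toeplitz_one imat_mult_add_left imat_mult_id_left block_upper_binom_inv
        toeplitz_rep_N_mult_binom_inv)
  then show ?thesis
    by (simp add: tau_int_def imat_mult_add_right imat_mult_assoc[symmetric] block_upper_binom_inv
        block_upper_shift binom_mat_mult_binom_inv imat_mult_id_left)
qed

text \<open>The \<open>2 \<times> 2\<close> block on the diagonal of \<open>toeplitz M\<close>: the constant term of \<open>M\<close> with
  both coordinates reversed.\<close>
definition const_block :: "fmat \<Rightarrow> int^2^2" where
  "const_block M = mat2 (fps_nth (e22 M) 0) (fps_nth (e21 M) 0)
    (fps_nth (e12 M) 0) (fps_nth (e11 M) 0)"

lemma const_block_mult: "const_block (A * B) = const_block A ** const_block B"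
  by (simp add: const_block_def mat2_mult algebra_simps)

lemma const_block_uminus: "const_block (- A) = - const_block A"
  by (simp add: const_block_def mat2_uminus)

lemma const_block_rep_S: "const_block rep_S = matS"
  and const_block_rep_T: "const_block rep_T = mat2 1 1 0 1"
  and const_block_rep_T_inv: "const_block rep_T_inv = mat2 1 (-1) 0 1"
  by (simp_all add: const_block_def rep_S_def rep_T_def rep_T_inv_def fps_c_def fps_b_def matS_eq)

lemma const_block_rep_T_pow: "const_block (rep_T_pow q) = mat2 1 q 0 1"
proof (induction q rule: int_induct[where k=0])
  case base
  then show ?case by (simp add: const_block_def)
next
  case (step1 i)
  then show ?case by (simp add: rep_T_pow_add1 const_block_mult const_block_rep_T mat2_mult)
next
  case (step2 i)
  then show ?case by (simp add: rep_T_pow_diff1 const_block_mult const_block_rep_T_inv mat2_mult)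
qed

lemma const_block_rep: "det Y = 1 \<Longrightarrow> const_block (rep Y) = Y"
proof (induction Y rule: rep.induct)
  case (1 Y)
  obtain a b c d where Y: "Y = mat2 a b c d" by (rule mat2_cases)
  show ?case
  proof (cases "c = 0")
    case True
    then have "(a = 1 \<and> d = 1) \<or> (a = -1 \<and> d = -1)"
      using det_one_lower_left_zero "1.prems" Y by blast
    then show ?thesis
      using True by (auto simp: Y rep_upper const_block_rep_T_pow const_block_uminus mat2_uminus)
  next
    case False
    have "const_block (rep (euclid_step Y)) = euclid_step Y"
      using "1.IH" False Y "1.prems" det_euclid_step by simp
    then show ?thesis
      using False euclid_step_decomp[of Y]
      by (simp add: rep_step Y const_block_mult const_block_rep_T_pow
        const_block_rep_S matrix_mul_assoc)
  qed
qed

definition diag_block :: "imat \<Rightarrow> nat \<Rightarrow> int^2^2" where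
  "diag_block X i = mat2 (X (2*i-1) (2*i-1)) (X (2*i-1) (2*i)) (X (2*i) (2*i-1)) (X (2*i) (2*i))"

lemma imat_mult_diag_entry:
  assumes "block_upper X" "block_upper Y" "1 \<le> i" "m \<in> {2*i-1, 2*i}" "n \<in> {2*i-1, 2*i}"
  shows "imat_mult X Y m n = X m (2*i-1) * Y (2*i-1) n + X m (2*i) * Y (2*i) n"
proof -
  have blocks: "block m = i" "block n = i" using assms(3-5) by (auto simp: block_def)
  have "imat_mult X Y m n = (\<Sum>k\<in>{2*i-1, 2*i}. X m k * Y k n)"
  proof (rule imat_mult_eq_sum[OF assms(2)])
    show "\<forall>k\<in>{1..2 * block n} - {2*i-1, 2*i}. X m k * Y k n = 0"
    proof
      fix k assume "k \<in> {1..2 * block n} - {2*i-1, 2*i}"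
      then have "block k < block m" using blocks unfolding block_def by auto
      then show "X m k * Y k n = 0" using block_upperD[OF assms(1), of m k] by auto
    qed
  qed (use blocks assms(3) in auto)
  also have "\<dots> = X m (2*i-1) * Y (2*i-1) n + X m (2*i) * Y (2*i) n" using assms(3) by simp
  finally show ?thesis .
qed

lemma diag_block_mult:
  "block_upper X \<Longrightarrow> block_upper Y \<Longrightarrow> 1 \<le> i \<Longrightarrow>
    diag_block (imat_mult X Y) i = diag_block X i ** diag_block Y i"
  by (simp add: diag_block_def imat_mult_diag_entry mat2_mult)

lemma diag_block_binom_mat: "1 \<le> i \<Longrightarrow> diag_block binom_mat i = mat2 1 (int i) 0 1"
  by (auto simp: diag_block_def binom_mat_def)

lemma diag_block_toeplitz: "1 \<le> i \<Longrightarrow> diag_block (toeplitz M) i = const_block M"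
  by (auto simp: diag_block_def toeplitz_def const_block_def entry_def)

lemma diag_block_binom_inv: "1 \<le> i \<Longrightarrow> diag_block binom_inv i = mat2 1 (- int i) 0 1"
proof -
  assume i: "1 \<le> i"
  have "const_block (rep_T_inv ^ i) = mat2 1 (- int i) 0 1"
    by (induction i) (simp_all add: const_block_def[of 1] const_block_mult const_block_rep_T_inv
        mat2_mult algebra_simps)
  moreover have "diag_block binom_inv i = diag_block (toeplitz (rep_T_inv ^ i)) i"
    using i by (simp add: diag_block_def binom_inv_def)
  ultimately show ?thesis using diag_block_toeplitz[OF i] by simp
qed

lemma diag_block_tau_int:
  "det Y = 1 \<Longrightarrow> 1 \<le> i \<Longrightarrow> diag_block (tau_int Y) i = mat2 1 (int i) 0 1 ** Y ** mat2 1 (- int i) 0 1"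
  by (simp add: tau_int_def diag_block_mult block_upper_binom_mat block_upper_toeplitz_mult_binom_inv
      block_upper_toeplitz block_upper_binom_inv diag_block_binom_mat diag_block_binom_inv
      diag_block_toeplitz const_block_rep matrix_mul_assoc)

section \<open>Growth of the entries of \<open>\<tau>(S)\<close>\<close>

lemma abs_catalan_alt_Suc_le:
  "\<bar>catalan_alt (Suc n)\<bar> \<le> (\<Sum>i\<le>n. \<bar>catalan_alt i\<bar> * \<bar>catalan_alt (n - i)\<bar>)"
  by (simp add: abs_mult[symmetric] sum_abs)

definition scaled_catalan :: "nat \<Rightarrow> real" where
  "scaled_catalan k = \<bar>catalan_alt k\<bar> / 4 ^ k"

lemma scaled_catalan_nonneg: "0 \<le> scaled_catalan k"
  by (simp add: scaled_catalan_def)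

lemma scaled_catalan_Suc_le:
  "scaled_catalan (Suc k) \<le> (1/4) * (\<Sum>i\<le>k. scaled_catalan i * scaled_catalan (k - i))"
proof -
  have "scaled_catalan (Suc k) \<le> (\<Sum>i\<le>k. real_of_int (\<bar>catalan_alt i\<bar> * \<bar>catalan_alt (k - i)\<bar>))
      / 4 ^ Suc k"
    unfolding scaled_catalan_def of_int_sum[symmetric]
    by (intro divide_right_mono) (simp_all only: of_int_le_iff abs_catalan_alt_Suc_le zero_le_power)
  also have "\<dots> = (\<Sum>i\<le>k. (1/4) * (scaled_catalan i * scaled_catalan (k - i)))"
    unfolding sum_divide_distrib
  proof (rule sum.cong[OF refl])
    fix i assume "i \<in> {..k}"
    then have "(4::real) ^ Suc k = 4 * (4 ^ i * 4 ^ (k - i))" by (simp add: power_add[symmetric])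
    then show "real_of_int (\<bar>catalan_alt i\<bar> * \<bar>catalan_alt (k - i)\<bar>) / 4 ^ Suc k
        = (1/4) * (scaled_catalan i * scaled_catalan (k - i))"
      by (simp add: scaled_catalan_def)
  qed
  finally show ?thesis by (simp only: sum_distrib_left)
qed

lemma sum_convolution_le_square:
  fixes x :: "nat \<Rightarrow> real"
  assumes "\<And>k. 0 \<le> x k"
  shows "(\<Sum>k\<le>n. \<Sum>i\<le>k. x i * x (k - i)) \<le> (\<Sum>i\<le>n. x i)\<^sup>2"
proof -
  have "(\<Sum>k\<le>n. \<Sum>i\<le>k. x i * x (k - i)) = (\<Sum>(i, j)\<in>{(i, j). i + j \<le> n}. x i * x j)"
    by (rule sum.triangle_reindex_eq[symmetric])
  also have "\<dots> \<le> (\<Sum>(i, j)\<in>{..n} \<times> {..n}. x i * x j)"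
    by (rule sum_mono2) (auto simp: assms)
  also have "\<dots> = (\<Sum>i\<le>n. x i)\<^sup>2"
    by (simp add: power2_eq_square sum_product sum.cartesian_product)
  finally show ?thesis .
qed

text \<open>The generating function of \<open>scaled_catalan\<close> is dominated by that of the Catalan numbers at
  \<open>1/4\<close>: the partial sums \<open>s\<close> obey \<open>s \<le> 1 + s\<^sup>2/4\<close>, which keeps them below \<open>2\<close>.\<close>
lemma sum_scaled_catalan_le: "(\<Sum>k\<le>n. scaled_catalan k) \<le> 2"
proof (induction n)
  case 0
  then show ?case by (simp add: scaled_catalan_def)
next
  case (Suc n)
  have "(\<Sum>k\<le>Suc n. scaled_catalan k) = scaled_catalan 0 + (\<Sum>k\<le>n. scaled_catalan (Suc k))"
    by (rule sum.atMost_Suc_shift)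
  also have "\<dots> \<le> 1 + (\<Sum>k\<le>n. (1/4) * (\<Sum>i\<le>k. scaled_catalan i * scaled_catalan (k - i)))"
    by (intro add_mono sum_mono scaled_catalan_Suc_le) (simp add: scaled_catalan_def)
  also have "\<dots> = 1 + (1/4) * (\<Sum>k\<le>n. \<Sum>i\<le>k. scaled_catalan i * scaled_catalan (k - i))"
    by (simp add: sum_distrib_left)
  also have "\<dots> \<le> 1 + (1/4) * (\<Sum>i\<le>n. scaled_catalan i)\<^sup>2"
    using sum_convolution_le_square[of scaled_catalan n] scaled_catalan_nonneg by simp
  also have "\<dots> \<le> 1 + (1/4) * 2\<^sup>2"
    using Suc.IH by (intro add_left_mono mult_left_mono power_mono)
      (simp_all add: sum_nonneg scaled_catalan_nonneg)
  finally show ?case by simp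
qed

lemma abs_catalan_alt_le: "\<bar>catalan_alt n\<bar> \<le> 2 * 4 ^ n"
proof -
  have "scaled_catalan n \<le> (\<Sum>k\<le>n. scaled_catalan k)"
    by (rule member_le_sum) (simp_all add: scaled_catalan_nonneg)
  then have "scaled_catalan n \<le> 2" using sum_scaled_catalan_le[of n] by linarith
  then have "real_of_int \<bar>catalan_alt n\<bar> \<le> real_of_int (2 * 4 ^ n)"
    by (simp add: scaled_catalan_def field_simps)
  then show ?thesis by (simp only: of_int_le_iff)
qed

lemma abs_entry_rep_S_le: "\<bar>fps_nth (entry rep_S i j) k\<bar> \<le> 2 * 4 ^ k"
proof -
  have "\<bar>fps_nth fps_b k\<bar> \<le> 2 * 4 ^ k"
  proof (cases k)
    case (Suc l)
    then have "\<bar>fps_nth fps_b k\<bar> = \<bar>catalan_alt l\<bar>" by (simp add: fps_b_def fps_c_def)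
    also have "\<dots> \<le> 2 * 4 ^ l" by (rule abs_catalan_alt_le)
    finally show ?thesis using Suc by simp
  qed (simp add: fps_b_def)
  moreover have "\<bar>fps_nth fps_c k\<bar> \<le> 2 * 4 ^ k"
    using abs_catalan_alt_le by (simp add: fps_c_def)
  ultimately show ?thesis by (simp add: entry_def rep_S_def)
qed

lemma abs_entry_rep_T_inv_pow_le: "\<bar>fps_nth (entry (rep_T_inv ^ L) i j) k\<bar> \<le> 3 ^ L"
proof (induction L arbitrary: k i j)
  case 0
  then show ?case by (simp add: entry_def)
next
  case (Suc L)
  define u v where "u = entry (rep_T_inv ^ L) True j" and "v = entry (rep_T_inv ^ L) False j"
  have u: "\<bar>fps_nth u k\<bar> \<le> 3 ^ L" and v: "\<bar>fps_nth v k\<bar> \<le> 3 ^ L" for k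
    using Suc.IH unfolding u_def v_def by blast+
  have entry: "entry (rep_T_inv ^ Suc L) i j = (if i then u + fps_X * (u - v) else v - u)"
    by (simp add: u_def v_def entry_def rep_T_inv_def algebra_simps)
  have shifted: "\<bar>fps_nth (fps_X * (u - v)) k\<bar> \<le> 2 * 3 ^ L"
  proof (cases k)
    case (Suc l)
    then show ?thesis using u[of l] v[of l]
          abs_triangle_ineq4[of "fps_nth u l" "fps_nth v l"] by simp
  qed simp
  show ?case
  proof (cases i)
    case True
    have "\<bar>fps_nth u k + fps_nth (fps_X * (u - v)) k\<bar>
        \<le> \<bar>fps_nth u k\<bar> + \<bar>fps_nth (fps_X * (u - v)) k\<bar>"
      by (rule abs_triangle_ineq)
    then show ?thesis using True entry u[of k] shifted by simp
  next
    case False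
    then show ?thesis
      using entry u[of k] v[of k] abs_triangle_ineq4[of "fps_nth v k" "fps_nth u k"] by simp
  qed
qed

lemma block_le_self: "block n \<le> n"
  unfolding block_def by simp

lemma abs_imat_mult_le:
  assumes n: "1 \<le> n"
    and X: "\<forall>k\<in>{1..2 * block n}. \<bar>X m k\<bar> \<le> a" and Y: "\<forall>k\<in>{1..2 * block n}. \<bar>Y k n\<bar> \<le> b"
  shows "\<bar>imat_mult X Y m n\<bar> \<le> 2 ^ n * (a * b)"
proof -
  have range: "1 \<in> {1..2 * block n}" using n by (simp add: block_def)
  then have ab: "0 \<le> a * b" using X Y by (meson abs_ge_zero order_trans zero_le_mult_iff)
  have "\<bar>imat_mult X Y m n\<bar> \<le> (\<Sum>k\<in>{1..2 * block n}. \<bar>X m k\<bar> * \<bar>Y k n\<bar>)"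
    unfolding imat_mult_def abs_mult[symmetric] by (rule sum_abs)
  also have "\<dots> \<le> (\<Sum>k\<in>{1..2 * block n}. a * b)"
    using X Y by (intro sum_mono mult_mono) (auto intro: order_trans[OF abs_ge_zero])
  also have "\<dots> = int (2 * block n) * (a * b)" by simp
  also have "\<dots> \<le> 2 ^ n * (a * b)"
  proof (rule mult_right_mono[OF _ ab])
    have "2 * block n \<le> n + 1" unfolding block_def by simp
    also have "\<dots> \<le> 2 ^ n" using less_exp[of n] by (simp add: Suc_le_eq)
    finally show "int (2 * block n) \<le> 2 ^ n" by (metis of_nat_le_iff of_nat_numeral of_nat_power)
  qed
  finally show ?thesis .
qed

lemma abs_binom_mat_le: "k \<in> {1..2 * block n} \<Longrightarrow> \<bar>binom_mat m k\<bar> \<le> 2 ^ n"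
proof -
  assume "k \<in> {1..2 * block n}"
  then have "block k \<le> n" using block_le_self[of n] unfolding block_def by auto
  then have "block k choose (k - m) \<le> 2 ^ n"
    using binomial_le_pow2[of "block k" "k - m"]
      power_increasing[of "block k" n "2::nat"] by linarith
  then have "int (block k choose (k - m)) \<le> 2 ^ n"
    by (metis of_nat_le_iff of_nat_numeral of_nat_power)
  then show ?thesis by (simp add: binom_mat_def)
qed

lemma abs_toeplitz_rep_S_le: "1 \<le> n \<Longrightarrow> l \<in> {1..2 * block n} \<Longrightarrow> \<bar>toeplitz rep_S k l\<bar> \<le> 2 ^ (3 * n)"
proof -
  assume n: "1 \<le> n" and "l \<in> {1..2 * block n}"
  then have "block l \<le> n" using block_le_self[of n] unfolding block_def by auto
  have "\<bar>toeplitz rep_S k l\<bar> \<le> 2 * 4 ^ (block l - block k)"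
    using abs_entry_rep_S_le[of "even k" "even l" "block l - block k"] by (auto simp: toeplitz_def)
  also have "\<dots> \<le> 2 * 4 ^ n" using \<open>block l \<le> n\<close> by simp
  also have "\<dots> = 2 ^ (2 * n + 1)" by (simp add: power_mult)
  also have "\<dots> \<le> 2 ^ (3 * n)" using n by (intro power_increasing) auto
  finally show ?thesis .
qed

lemma abs_binom_inv_le: "\<bar>binom_inv l n\<bar> \<le> 2 ^ (2 * n)"
proof -
  have "\<bar>binom_inv l n\<bar> \<le> 3 ^ block n"
    using abs_entry_rep_T_inv_pow_le by (simp add: binom_inv_def toeplitz_def)
  also have "\<dots> \<le> 3 ^ n" by (intro power_increasing block_le_self) simp
  also have "\<dots> \<le> 4 ^ n" by (intro power_mono) simp_all
  also have "\<dots> = 2 ^ (2 * n)" by (simp add: power_mult)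
  finally show ?thesis .
qed

lemma rep_matS: "rep matS = rep_S"
  by (simp add: rep_step matS_eq euclid_step_def rep_upper)

lemma abs_tau_int_S_le: "1 \<le> n \<Longrightarrow> \<bar>tau_int matS m n\<bar> \<le> 2 ^ (8 * n)"
proof -
  assume n: "1 \<le> n"
  have "\<bar>imat_mult (toeplitz rep_S) binom_inv k n\<bar> \<le> 2 ^ n * (2 ^ (3 * n) * 2 ^ (2 * n))" for k
    using n abs_toeplitz_rep_S_le abs_binom_inv_le by (intro abs_imat_mult_le) auto
  then have "\<bar>tau_int matS m n\<bar> \<le> 2 ^ n * (2 ^ n * (2 ^ n * (2 ^ (3 * n) * 2 ^ (2 * n))))"
    unfolding tau_int_def rep_matS using n abs_binom_mat_le by (intro abs_imat_mult_le) auto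
  also have "\<dots> = 2 ^ (8 * n)" by (simp add: power_add[symmetric])
  finally show ?thesis .
qed

section \<open>The filtration and its quotients\<close>

definition cmat :: "imat \<Rightarrow> mat" where "cmat X = (\<lambda>m n. of_int (X m n))"

lemma cmat_mult: "block_upper Y \<Longrightarrow> cmat X \<star> cmat Y = cmat (imat_mult X Y)"
proof (intro ext)
  fix m n assume bu: "block_upper Y"
  have "(cmat X \<star> cmat Y) m n = (\<Sum>k\<in>{k. Y k n \<noteq> 0}. of_int (X m k * Y k n))"
    by (simp add: mat_mult_def cmat_def)
  also have "\<dots> = (\<Sum>k\<in>{1..2 * block n}. of_int (X m k * Y k n))"
    using block_upperD[OF bu] block_le_imp_le by (intro sum.mono_neutral_left) auto
  also have "\<dots> = cmat (imat_mult X Y) m n" by (simp add: cmat_def imat_mult_def)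
  finally show "(cmat X \<star> cmat Y) m n = cmat (imat_mult X Y) m n" .
qed

lemma cmat_id: "cmat imat_id = mat_id"
  by (intro ext) (auto simp: cmat_def imat_id_def mat_id_def)

lemma cmat_in_ringA: "block_upper X \<Longrightarrow> cmat X \<in> ringA"
proof -
  assume bu: "block_upper X"
  have "finite {i. cmat X i j \<noteq> 0}" for j
    by (rule finite_subset[of _ "{1..2 * block j}"])
      (use block_upperD[OF bu] block_le_imp_le in \<open>auto simp: cmat_def\<close>)
  moreover have "cmat X i j = 0" if "i = 0 \<or> j = 0" for i j
    using that block_upperD[OF bu, of i j] by (auto simp: cmat_def)
  ultimately show ?thesis by (auto simp: ringA_def)
qed

lemma filtE_zero: "v \<in> filtE i \<Longrightarrow> n = 0 \<or> 2 * i < n \<Longrightarrow> v n = 0"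
  by (auto simp: filtE_def spaceE_def)

lemma mat_act_filtE_eq_sum: "v \<in> filtE i \<Longrightarrow> mat_act M v n = (\<Sum>k\<in>{1..2 * i}. M n k * v k)"
proof -
  assume v: "v \<in> filtE i"
  have "{k. v k \<noteq> 0} \<subseteq> {1..2 * i}"
  proof
    fix k assume "k \<in> {k. v k \<noteq> 0}"
    then have "\<not> (k = 0 \<or> 2 * i < k)" using filtE_zero[OF v, of k] by blast
    then show "k \<in> {1..2 * i}" by auto
  qed
  then show ?thesis unfolding mat_act_def by (intro sum.mono_neutral_left) auto
qed

lemma mat_act_cmat_filtE:
  assumes bu: "block_upper X" and v: "v \<in> filtE i"
  shows "mat_act (cmat X) v \<in> filtE i"
proof -
  have zero: "mat_act (cmat X) v n = 0" if "n = 0 \<or> 2 * i < n" for n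
  proof -
    have "X n k = 0" if "k \<in> {1..2 * i}" for k
    proof -
      have "block k \<le> i" "n = 0 \<or> i < block n"
        using that \<open>n = 0 \<or> 2 * i < n\<close> unfolding block_def by auto
      then show ?thesis using block_upperD[OF bu, of n k] by fastforce
    qed
    then show ?thesis by (simp add: mat_act_filtE_eq_sum[OF v] cmat_def)
  qed
  have "{n. mat_act (cmat X) v n \<noteq> 0} \<subseteq> {0..2 * i}"
  proof
    fix n assume "n \<in> {n. mat_act (cmat X) v n \<noteq> 0}"
    then have "\<not> (n = 0 \<or> 2 * i < n)" using zero by blast
    then show "n \<in> {0..2 * i}" by simp
  qed
  then have "finite {n. mat_act (cmat X) v n \<noteq> 0}" by (rule finite_subset) simp
  then show ?thesis using zero by (simp add: filtE_def spaceE_def)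
qed

lemma mat_act_cmat_block:
  assumes bu: "block_upper X" and v: "v \<in> filtE i" and i: "1 \<le> i" and m: "m \<in> {2*i-1, 2*i}"
  shows "mat_act (cmat X) v m = cmat X m (2*i-1) * v (2*i-1) + cmat X m (2*i) * v (2*i)"
proof -
  have "block m = i" using m i by (auto simp: block_def)
  have "cmat X m k * v k = 0" if "k \<in> {1..2 * i} - {2*i-1, 2*i}" for k
  proof -
    have "block k < i" using that unfolding block_def by auto
    then show ?thesis using block_upperD[OF bu, of m k] \<open>block m = i\<close> by (auto simp: cmat_def)
  qed
  then have "mat_act (cmat X) v m = (\<Sum>k\<in>{2*i-1, 2*i}. cmat X m k * v k)"
    unfolding mat_act_filtE_eq_sum[OF v] using i by (intro sum.mono_neutral_right) auto
  also have "\<dots> = cmat X m (2*i-1) * v (2*i-1) + cmat X m (2*i) * v (2*i)" using i by simp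
  finally show ?thesis .
qed

text \<open>Coordinates of \<open>E\<^sub>i/E\<^sub>i\<^sub>-\<^sub>1\<close> that undo the conjugation by \<open>T\<^sup>i\<close> in
  \<open>diag_block_tau_int\<close>.\<close>
definition quot_map :: "nat \<Rightarrow> vect \<Rightarrow> complex^2" where
  "quot_map i v = vector [v (2*i-1) - of_nat i * v (2*i), v (2*i)]"

lemma quot_map_nth: "quot_map i v $ 1 = v (2*i-1) - of_nat i * v (2*i)" "quot_map i v $ 2 = v (2*i)"
  by (simp_all add: quot_map_def)

lemma quot_map_linear: "quot_map i (\<lambda>n. a * u n + b * v n) = a *s quot_map i u + b *s quot_map i v"
  by (simp add: vec_eq_iff forall_2 quot_map_nth algebra_simps)

lemma quot_map_surj:
  assumes i: "1 \<le> i"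
  shows "quot_map i ` filtE i = UNIV"
proof (rule set_eqI, rule iffI)
  fix w :: "complex^2"
  define v where "v n = (if n = 2*i-1 then w$1 + of_nat i * w$2
    else if n = 2*i then w$2 else 0)" for n
  have "finite {n. v n \<noteq> 0}" by (rule finite_subset[of _ "{2*i-1, 2*i}"]) (auto simp: v_def)
  moreover have "v 0 = 0" "\<forall>n>2*i. v n = 0" using i by (auto simp: v_def)
  ultimately have "v \<in> filtE i" by (simp add: filtE_def spaceE_def)
  moreover have "2*i \<noteq> 2*i - 1" using i by simp
  then have "quot_map i v = w" by (simp add: vec_eq_iff forall_2 quot_map_nth v_def)
  ultimately show "w \<in> quot_map i ` filtE i" by blast
qed simp

lemma filtE_pred_iff:
  assumes i: "1 \<le> i"
  shows "v \<in> filtE (i - 1) \<longleftrightarrow> v \<in> filtE i \<and> v (2*i-1) = 0 \<and> v (2*i) = 0"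
proof -
  have "(\<forall>n>2 * (i - 1). v n = 0) \<longleftrightarrow> v (2*i-1) = 0 \<and> v (2*i) = 0 \<and> (\<forall>n>2 * i. v n = 0)"
  proof
    assume "\<forall>n>2 * (i - 1). v n = 0"
    moreover have "2 * (i - 1) < 2*i-1" "2 * (i - 1) < 2*i" using i by linarith+
    ultimately show "v (2*i-1) = 0 \<and> v (2*i) = 0 \<and> (\<forall>n>2 * i. v n = 0)" by auto
  next
    assume h: "v (2*i-1) = 0 \<and> v (2*i) = 0 \<and> (\<forall>n>2 * i. v n = 0)"
    show "\<forall>n>2 * (i - 1). v n = 0"
    proof (intro allI impI)
      fix n assume "2 * (i - 1) < n"
      then have "n = 2*i-1 \<or> n = 2*i \<or> 2 * i < n" using i by linarith
      then show "v n = 0" using h by blast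
    qed
  qed
  then show ?thesis by (auto simp: filtE_def)
qed

lemma quot_map_kernel:
  assumes i: "1 \<le> i"
  shows "{v \<in> filtE i. quot_map i v = 0} = filtE (i - 1)"
proof -
  have "quot_map i v = 0 \<longleftrightarrow> v (2*i-1) = 0 \<and> v (2*i) = 0" for v
    by (auto simp: vec_eq_iff forall_2 quot_map_nth)
  then show ?thesis using filtE_pred_iff[OF i] by blast
qed

lemma std_act_nth:
  "std_act Y w $ 1 = of_int (Y$1$1) * w$1 + of_int (Y$1$2) * w$2"
  "std_act Y w $ 2 = of_int (Y$2$1) * w$1 + of_int (Y$2$2) * w$2"
  by (simp_all add: std_act_def matrix_vector_mult_def sum_2)

lemma tau_int_diag_entries:
  assumes Y: "det Y = 1" and i: "1 \<le> i"
  shows "tau_int Y (2*i-1) (2*i-1) = Y$1$1 + int i * Y$2$1"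
    and "tau_int Y (2*i-1) (2*i) = (Y$1$2 - Y$1$1 * int i) + int i * (Y$2$2 - Y$2$1 * int i)"
    and "tau_int Y (2*i) (2*i-1) = Y$2$1"
    and "tau_int Y (2*i) (2*i) = Y$2$2 - Y$2$1 * int i"
proof -
  obtain a b c d where Y_eq: "Y = mat2 a b c d" by (rule mat2_cases)
  have "diag_block (tau_int Y) i
      = mat2 (a + int i * c) ((b - a * int i) + int i * (d - c * int i)) c (d - c * int i)"
    using diag_block_tau_int[OF Y i] by (simp add: Y_eq mat2_mult algebra_simps)
  then show "tau_int Y (2*i-1) (2*i-1) = Y$1$1 + int i * Y$2$1"
    "tau_int Y (2*i-1) (2*i) = (Y$1$2 - Y$1$1 * int i) + int i * (Y$2$2 - Y$2$1 * int i)"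
    "tau_int Y (2*i) (2*i-1) = Y$2$1" "tau_int Y (2*i) (2*i) = Y$2$2 - Y$2$1 * int i"
    by (simp_all add: diag_block_def mat2_eq_iff Y_eq)
qed

lemma quot_map_equivariant:
  assumes Y: "det Y = 1" and i: "1 \<le> i" and v: "v \<in> filtE i"
  shows "quot_map i (mat_act (cmat (tau_int Y)) v) = std_act Y (quot_map i v)"
proof -
  have "2*i-1 \<in> {2*i-1, 2*i}" "2*i \<in> {2*i-1, 2*i}" by simp_all
  note act = this[THEN mat_act_cmat_block[OF block_upper_tau_int v i]]
  define a b c d where "a = complex_of_int (Y$1$1)" and "b = complex_of_int (Y$1$2)"
    and "c = complex_of_int (Y$2$1)" and "d = complex_of_int (Y$2$2)"
  have act1: "mat_act (cmat (tau_int Y)) v (2*i-1) = (a + of_nat i * c) * v (2*i-1)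
      + ((b - a * of_nat i) + of_nat i * (d - c * of_nat i)) * v (2*i)"
    and act2: "mat_act (cmat (tau_int Y)) v (2*i) = c * v (2*i-1) + (d - c * of_nat i) * v (2*i)"
    unfolding act unfolding cmat_def tau_int_diag_entries[OF Y i]
    by (simp_all add: a_def b_def c_def d_def)
  show ?thesis
    unfolding vec_eq_iff forall_2 quot_map_nth std_act_nth act1 act2
    unfolding a_def[symmetric] b_def[symmetric] c_def[symmetric] d_def[symmetric]
    by (simp add: algebra_simps)
qed

definition tau :: "int^2^2 \<Rightarrow> mat" where "tau Y = cmat (tau_int Y)"

lemma tau_mult: "X \<in> SL2Z \<Longrightarrow> Y \<in> SL2Z \<Longrightarrow> tau (X ** Y) = tau X \<star> tau Y"
  by (simp add: tau_def SL2Z_def cmat_mult block_upper_tau_int tau_int_mult)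

lemma tau_id: "tau (mat2 1 0 0 1) = mat_id"
  by (simp add: tau_def tau_int_id cmat_id)

lemma SL2Z_adjugate:
  assumes "X \<in> SL2Z"
  defines "A \<equiv> mat2 (X$2$2) (- X$1$2) (- X$2$1) (X$1$1)"
  shows "A \<in> SL2Z" and "X ** A = mat2 1 0 0 1" and "A ** X = mat2 1 0 0 1"
proof -
  obtain a b c d where X: "X = mat2 a b c d" by (rule mat2_cases)
  have "a * d - b * c = 1" using assms(1) by (simp add: X SL2Z_def det_mat2)
  then show "A \<in> SL2Z" "X ** A = mat2 1 0 0 1" "A ** X = mat2 1 0 0 1"
    by (simp_all add: A_def X SL2Z_def mat2_mult det_mat2 algebra_simps)
qed

lemma tau_in_unitsA:
  assumes X: "X \<in> SL2Z"
  shows "tau X \<in> unitsA"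
proof -
  let ?A = "mat2 (X$2$2) (- X$1$2) (- X$2$1) (X$1$1)"
  have "tau X \<star> tau ?A = mat_id" "tau ?A \<star> tau X = mat_id"
    using SL2Z_adjugate[OF X] X by (simp_all add: tau_mult[symmetric] tau_id)
  moreover have "tau Z \<in> ringA" for Z by (simp add: tau_def cmat_in_ringA block_upper_tau_int)
  ultimately show ?thesis unfolding unitsA_def by blast
qed

lemma tau_filtE: "v \<in> filtE i \<Longrightarrow> mat_act (tau Y) v \<in> filtE i"
  by (simp add: tau_def mat_act_cmat_filtE block_upper_tau_int)

lemma tau_matT: "tau matT = J_inf"
  by (intro ext) (auto simp: tau_def tau_int_T cmat_def imat_id_def shift_def J_inf_def)

lemma tau_Ints: "tau Y i j \<in> \<int>"
  by (simp add: tau_def cmat_def)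

lemma norm_tau_matS_le: "1 \<le> j \<Longrightarrow> norm (tau matS i j) \<le> 2 powr (8 * real j)"
proof -
  assume "1 \<le> j"
  then have "real_of_int \<bar>tau_int matS i j\<bar> \<le> 2 ^ (8 * j)"
    using abs_tau_int_S_le by (metis of_int_le_iff of_int_numeral of_int_power)
  then show ?thesis by (simp add: tau_def cmat_def powr_realpow[symmetric])
qed

theorem theorem5p1:
  shows "\<exists>\<tau> :: int^2^2 \<Rightarrow> mat.
    (\<forall>X\<in>SL2Z. \<tau> X \<in> unitsA) \<and>
    (\<forall>X\<in>SL2Z. \<forall>Y\<in>SL2Z. \<tau> (X ** Y) = \<tau> X \<star> \<tau> Y) \<and>
    (\<forall>i. \<forall>Y\<in>SL2Z. \<forall>v\<in>filtE i. mat_act (\<tau> Y) v \<in> filtE i) \<and>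
    (\<forall>i\<ge>1. \<exists>\<psi> :: vect \<Rightarrow> complex^2.
        (\<forall>u\<in>filtE i. \<forall>v\<in>filtE i. \<forall>a b. \<psi> (\<lambda>n. a * u n + b * v n) = a *s \<psi> u + b *s \<psi> v) \<and>
        \<psi> ` filtE i = UNIV \<and>
        {v\<in>filtE i. \<psi> v = 0} = filtE (i - 1) \<and>
        (\<forall>Y\<in>SL2Z. \<forall>v\<in>filtE i. \<psi> (mat_act (\<tau> Y) v) = std_act Y (\<psi> v))) \<and>
    \<tau> matT = J_inf \<and>
    (\<forall>Y\<in>SL2Z. \<forall>i j. \<tau> Y i j \<in> \<int>) \<and>
    (\<exists>C::real. \<forall>i\<ge>1. \<forall>j\<ge>1. norm (\<tau> matS i j) \<le> 2 powr (C * real j))"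
proof (intro exI[of _ tau] conjI ballI allI impI)
  fix i :: nat assume i: "1 \<le> i"
  show "\<exists>\<psi> :: vect \<Rightarrow> complex^2.
      (\<forall>u\<in>filtE i. \<forall>v\<in>filtE i. \<forall>a b. \<psi> (\<lambda>n. a * u n + b * v n) = a *s \<psi> u + b *s \<psi> v) \<and>
      \<psi> ` filtE i = UNIV \<and> {v\<in>filtE i. \<psi> v = 0} = filtE (i - 1) \<and>
      (\<forall>Y\<in>SL2Z. \<forall>v\<in>filtE i. \<psi> (mat_act (tau Y) v) = std_act Y (\<psi> v))"
    using quot_map_linear quot_map_surj[OF i] quot_map_kernel[OF i] quot_map_equivariant[OF _ i]
    by (intro exI[of _ "quot_map i"]) (auto simp: SL2Z_def tau_def)
next
  show "\<exists>C::real. \<forall>i\<ge>1. \<forall>j\<ge>1. norm (tau matS i j) \<le> 2 powr (C * real j)"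
    using norm_tau_matS_le by blast
qed (simp_all add: tau_in_unitsA tau_mult tau_filtE tau_matT tau_Ints)

end
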